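(* Let $\mathbb{K}$ be a positive commutative monoid and let $H$ be a hypergraph. The following are equivalent: (1) $H$ is acyclic; (2) $H$ has the local-to-global consistency property up to the free cover of $\mathbb{K}$; (3) $H$ has the local-to-global consistency property up to some cover of $\mathbb{K}$.
   Context: Positive: $p+q=0\Rightarrow p=q=0$; monoids have at least two elements. Attributes have domains (arbitrary sets); for a finite attribute set $X$, a $\mathbb{K}$-relation over $X$ is a map $R$ from $X$-tuples to $K$ with finite support $R'$; $t[Y]$ is restriction; marginals $R[Y](t)=\sum_{r\in R',r[Y]=t}R(r)$. With $R_i$ over $X_i$, a collection is pairwise consistent if every two $R_i,R_j$ have some $W$ over $X_i\cup X_j$ with $W[X_i]=R_i,W[X_j]=R_j$, globally consistent if some $W$ over $\bigcup_i X_i$ has $W[X_i]=R_i$ for all $i$. A cover of $\mathbb{K}$ is a pair $(\mathbb{K}^*,h)$, $\mathbb{K}^*$ a positive commutative monoid and $h:\mathbb{K}^*\to\mathbb{K}$ a surjective homomorphism; an $h$-lift of $R$ is a $\mathbb{K}^*$-relation $R^*$ with $h\circ R^*=R$. A collection is pairwise consistent up to the cover if some $h$-lifts $R_1^*,\dots,R_m^*$ form a pairwise consistent collection of $\mathbb{K}^*$-relations. A hypergraph with hyperedges $X_1,\dots,X_m$ (vertices as attributes) has the local-to-global consistency property up to the cover if every collection $R_1(X_1),\dots,R_m(X_m)$ of $\mathbb{K}$-relations that is pairwise consistent up to the cover is globally consistent. The free cover of $\mathbb{K}$ is $h:\mathbb{F}(K^+)\to\mathbb{K}$ where $K^+=K\setminus\{0\}$,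 $\mathbb{F}(K^+)$ is the free commutative monoid generated by $K^+$ (the finitely supported maps $K^+\to\mathbb{Z}^{\ge0}$ under pointwise addition), and $h$ is the unique homomorphism extending the identity on $K^+$. A hypergraph is acyclic (Beeri–Fagin–Maier–Yannakakis) iff it has a join tree: a tree on its hyperedges such that for each vertex the hyperedges containing it form a connected subtree. *)

theory Defs
  imports "HOL-Library.FuncSet" "HOL-Library.Multiset"
begin

text \<open>A commutative monoid is given by a carrier C inside a type of class comm_monoid_add
  (so associativity/commutativity/unit laws are inherited); it must be closed under +,
  contain 0, be positive, and have at least two elements.\<close>

definition pos_comm_monoid :: "'c::comm_monoid_add set \<Rightarrow> bool" where
  "pos_comm_monoid C \<longleftrightarrow>
     0 \<in> C \<and> (\<forall>x\<in>C. \<forall>y\<in>C. x + y \<in> C) \<and>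
     (\<forall>p\<in>C. \<forall>q\<in>C. p + q = 0 \<longrightarrow> p = 0 \<and> q = 0) \<and>
     (\<exists>x\<in>C. \<exists>y\<in>C. x \<noteq> y)"

definition is_cover :: "'c::comm_monoid_add set \<Rightarrow> ('c \<Rightarrow> 'k::comm_monoid_add) \<Rightarrow> bool" where
  "is_cover C h \<longleftrightarrow>
     pos_comm_monoid C \<and> h 0 = 0 \<and> (\<forall>x\<in>C. \<forall>y\<in>C. h (x + y) = h x + h y) \<and>
     h ` C = UNIV"

text \<open>Free cover: the free commutative monoid on K\<setminus>{0}, i.e. finitely supported maps
  K\<setminus>{0} \<rightarrow> nat, represented as multisets not containing 0; the homomorphism
  extending the identity is the multiset sum.\<close>

definition free_carrier :: "'k::comm_monoid_add multiset set" where
  "free_carrier = {M. 0 \<notin># M}"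

definition free_hom :: "'k::comm_monoid_add multiset \<Rightarrow> 'k" where
  "free_hom M = sum_mset M"

text \<open>Tuples over an attribute set X are the functions in extensional X (value undefined
  outside X); restriction t[Y] is restrict t Y.\<close>

definition krel :: "'c::comm_monoid_add set \<Rightarrow> 'a set \<Rightarrow> (('a \<Rightarrow> 'v) \<Rightarrow> 'c) \<Rightarrow> bool" where
  "krel C X R \<longleftrightarrow>
     (\<forall>t. R t \<in> C) \<and> finite {t. R t \<noteq> 0} \<and> (\<forall>t. R t \<noteq> 0 \<longrightarrow> t \<in> extensional X)"

definition marg :: "(('a \<Rightarrow> 'v) \<Rightarrow> 'c::comm_monoid_add) \<Rightarrow> 'a set \<Rightarrow> ('a \<Rightarrow> 'v) \<Rightarrow> 'c" where
  "marg R Y t = (\<Sum>r\<in>{r. R r \<noteq> 0 \<and> restrict r Y = t}. R r)"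

definition pairwise_consistent ::
  "'c::comm_monoid_add set \<Rightarrow> 'a set set \<Rightarrow> ('a set \<Rightarrow> ('a \<Rightarrow> 'v) \<Rightarrow> 'c) \<Rightarrow> bool" where
  "pairwise_consistent C H R \<longleftrightarrow>
     (\<forall>X\<in>H. \<forall>Y\<in>H. \<exists>W. krel C (X \<union> Y) W \<and> marg W X = R X \<and> marg W Y = R Y)"

definition globally_consistent ::
  "'c::comm_monoid_add set \<Rightarrow> 'a set set \<Rightarrow> ('a set \<Rightarrow> ('a \<Rightarrow> 'v) \<Rightarrow> 'c) \<Rightarrow> bool" where
  "globally_consistent C H R \<longleftrightarrow>
     (\<exists>W. krel C (\<Union>H) W \<and> (\<forall>X\<in>H. marg W X = R X))"

text \<open>Local-to-global consistency property of hypergraph H up to the cover (C,h), for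
  relations whose attribute values range over the type 'v (given as a TYPE argument).\<close>

definition lgc_up_to ::
  "'v itself \<Rightarrow> 'c::comm_monoid_add set \<Rightarrow> ('c \<Rightarrow> 'k::comm_monoid_add) \<Rightarrow> 'a set set \<Rightarrow> bool" where
  "lgc_up_to (_::'v itself) C h H \<longleftrightarrow>
     (\<forall>R :: 'a set \<Rightarrow> ('a \<Rightarrow> 'v) \<Rightarrow> 'k.
        (\<forall>X\<in>H. krel UNIV X (R X)) \<longrightarrow>
        (\<exists>Rs. (\<forall>X\<in>H. krel C X (Rs X) \<and> (\<forall>t. h (Rs X t) = R X t)) \<and>
              pairwise_consistent C H Rs) \<longrightarrow>
        globally_consistent UNIV H R)"

definition gwalk :: "'n set \<Rightarrow> 'n set set \<Rightarrow> 'n list \<Rightarrow> bool" where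
  "gwalk V E p \<longleftrightarrow> p \<noteq> [] \<and> set p \<subseteq> V \<and>
     (\<forall>i. Suc i < length p \<longrightarrow> {p ! i, p ! Suc i} \<in> E)"

definition is_tree :: "'n set \<Rightarrow> 'n set set \<Rightarrow> bool" where
  "is_tree V E \<longleftrightarrow> finite V \<and> V \<noteq> {} \<and>
     E \<subseteq> {{x, y} | x y. x \<in> V \<and> y \<in> V \<and> x \<noteq> y} \<and>
     (\<forall>x\<in>V. \<forall>y\<in>V. \<exists>p. gwalk V E p \<and> hd p = x \<and> last p = y) \<and>
     card E + 1 = card V"

definition is_join_tree :: "'a set set \<Rightarrow> 'a set set set \<Rightarrow> bool" where
  "is_join_tree H E \<longleftrightarrow> is_tree H E \<and>
     (\<forall>a. \<forall>X\<in>H. \<forall>Y\<in>H. a \<in> X \<and> a \<in> Y \<longrightarrow>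
        (\<exists>p. gwalk {Z\<in>H. a \<in> Z} E p \<and> hd p = X \<and> last p = Y))"

definition hg_acyclic :: "'a set set \<Rightarrow> bool" where
  "hg_acyclic H \<longleftrightarrow> H = {} \<or> (\<exists>E. is_join_tree H E)"

end

theory Submission
  imports Defs
begin

text \<open>
  If \<open>H\<close> is acyclic, a join tree lets us remove hyperedges one ear at a time. Over the free
  cover, i.e. for multiset-valued relations, two relations with the same marginal on their common
  attributes can always be glued, by matching their elements one at a time; hence pairwise
  consistent free lifts are globally consistent, by induction along the ears, and summing the
  multisets carries the global witness down to \<open>K\<close>.

  Conversely, removing an ear preserves the local-to-global property up to any cover, so it
  suffices to refute it for hypergraphs with at least two hyperedges and no ear. There we use a
  Tseitin-style parity construction: each vertex picks an even set of the hyperedges containing it,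
  and a hyperedge \<open>Z\<close> is satisfied if it is picked by an odd number of its vertices exactly when
  \<open>Z\<close> is a fixed hyperedge \<open>X\<^sub>0\<close>. The relations of satisfying tuples are pairwise consistent,
  because an ear-free hypergraph lets us toggle a vertex of \<open>B\<close> outside \<open>A\<close> to flip the
  satisfaction of \<open>B\<close> without touching \<open>A\<close>; but no tuple satisfies all hyperedges, since
  the picks add up to an even number while exactly one hyperedge demands an odd one. Positivity
  of \<open>K\<close> turns any global witness into such a tuple.
\<close>

definition add_submonoid :: "'c::comm_monoid_add set \<Rightarrow> bool" where
  "add_submonoid C \<longleftrightarrow> 0 \<in> C \<and> (\<forall>x\<in>C. \<forall>y\<in>C. x + y \<in> C)"

definition add_hom_on :: "'c::comm_monoid_add set \<Rightarrow> ('c \<Rightarrow> 'k::comm_monoid_add) \<Rightarrow> bool" where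
  "add_hom_on C h \<longleftrightarrow> h 0 = 0 \<and> (\<forall>x\<in>C. \<forall>y\<in>C. h (x + y) = h x + h y)"

lemma add_submonoid_UNIV: "add_submonoid UNIV"
  by (simp add: add_submonoid_def)

lemma sum_in_add_submonoid:
  assumes "add_submonoid C" "\<And>x. x \<in> A \<Longrightarrow> g x \<in> C"
  shows "sum g A \<in> C"
  using assms(2)
  by (induction A rule: infinite_finite_induct) (use assms(1) in \<open>auto simp: add_submonoid_def\<close>)

lemma add_hom_on_sum:
  assumes "add_submonoid C" "add_hom_on C h" "\<And>x. x \<in> A \<Longrightarrow> g x \<in> C"
  shows "h (sum g A) = (\<Sum>x\<in>A. h (g x))"
  using assms(3)
proof (induction A rule: infinite_finite_induct)
  case (insert x A)
  have "sum g A \<in> C"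
    using insert.prems by (intro sum_in_add_submonoid[OF assms(1)]) auto
  with insert show ?case
    using assms(2) by (simp add: add_hom_on_def)
qed (use assms(2) in \<open>auto simp: add_hom_on_def\<close>)

lemma pos_comm_monoid_add_submonoid: "pos_comm_monoid C \<Longrightarrow> add_submonoid C"
  by (simp add: pos_comm_monoid_def add_submonoid_def)

lemma pos_comm_monoid_ex_nonzero:
  assumes "pos_comm_monoid C"
  obtains k where "k \<in> C" "k \<noteq> 0"
  using assms unfolding pos_comm_monoid_def by metis

lemma pos_comm_monoid_sum_eq_0_iff:
  assumes "pos_comm_monoid C" "finite A" "\<And>x. x \<in> A \<Longrightarrow> g x \<in> C"
  shows "sum g A = 0 \<longleftrightarrow> (\<forall>x\<in>A. g x = 0)"
  using assms(2,3)
proof (induction A rule: finite_induct)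
  case (insert x A)
  have "g x \<in> C" "sum g A \<in> C"
    using insert.prems by (auto intro: sum_in_add_submonoid pos_comm_monoid_add_submonoid[OF assms(1)])
  then have "g x + sum g A = 0 \<longleftrightarrow> g x = 0 \<and> sum g A = 0"
    using assms(1) unfolding pos_comm_monoid_def by (metis add.right_neutral)
  with insert show ?case
    by simp
qed simp

lemma is_cover_add_submonoid: "is_cover C h \<Longrightarrow> add_submonoid C"
  by (simp add: is_cover_def pos_comm_monoid_add_submonoid)

lemma is_cover_add_hom_on: "is_cover C h \<Longrightarrow> add_hom_on C h"
  by (simp add: is_cover_def add_hom_on_def)

definition pushforward :: "('x \<Rightarrow> 'y) \<Rightarrow> ('x \<Rightarrow> 'c::comm_monoid_add) \<Rightarrow> 'y \<Rightarrow> 'c" where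
  "pushforward f W t = (\<Sum>r | W r \<noteq> 0 \<and> f r = t. W r)"

lemma marg_eq_pushforward: "marg W Y = pushforward (\<lambda>r. restrict r Y) W"
  by (rule ext) (simp add: marg_def pushforward_def)

lemma pushforward_eq_sum:
  assumes "finite S" "{r. W r \<noteq> 0} \<subseteq> S"
  shows "pushforward f W t = (\<Sum>r | r \<in> S \<and> f r = t. W r)"
  unfolding pushforward_def by (rule sum.mono_neutral_left) (use assms in auto)

lemma pushforward_nonzeroE:
  assumes "pushforward f W t \<noteq> 0"
  obtains r where "W r \<noteq> 0" "f r = t"
proof -
  have "{r. W r \<noteq> 0 \<and> f r = t} \<noteq> {}"
  proof
    assume empty: "{r. W r \<noteq> 0 \<and> f r = t} = {}"
    from assms show False
      unfolding pushforward_def empty by simp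
  qed
  then show ?thesis
    using that by blast
qed

lemma finite_support_pushforward:
  assumes "finite {r. W r \<noteq> 0}"
  shows "finite {t. pushforward f W t \<noteq> 0}"
proof (rule finite_subset[OF _ finite_imageI[OF assms, of f]])
  show "{t. pushforward f W t \<noteq> 0} \<subseteq> f ` {r. W r \<noteq> 0}"
    by (auto elim: pushforward_nonzeroE)
qed

lemma pushforward_comp:
  assumes fin: "finite {r. W r \<noteq> 0}"
  shows "pushforward g (pushforward f W) = pushforward (g \<circ> f) W"
proof
  fix t
  define S where "S = {r. W r \<noteq> 0}"
  have "finite S"
    using fin by (simp add: S_def)
  have "{s. pushforward f W s \<noteq> 0} \<subseteq> f ` S"
    by (auto simp: S_def elim: pushforward_nonzeroE)
  then have "pushforward g (pushforward f W) t = (\<Sum>s | s \<in> f ` S \<and> g s = t. pushforward f W s)"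
    using \<open>finite S\<close> by (intro pushforward_eq_sum) auto
  also have "\<dots> = (\<Sum>s | s \<in> f ` S \<and> g s = t. \<Sum>r | r \<in> {r \<in> S. g (f r) = t} \<and> f r = s. W r)"
    using \<open>finite S\<close> by (intro sum.cong refl) (auto simp: S_def pushforward_eq_sum intro!: sum.cong)
  also have "\<dots> = (\<Sum>r | r \<in> S \<and> g (f r) = t. W r)"
    using \<open>finite S\<close> by (intro sum.group) auto
  also have "\<dots> = pushforward (g \<circ> f) W t"
    using \<open>finite S\<close> by (simp add: S_def pushforward_eq_sum)
  finally show "pushforward g (pushforward f W) t = pushforward (g \<circ> f) W t" .
qed

lemma pushforward_id:
  assumes "\<And>r. W r \<noteq> 0 \<Longrightarrow> f r = r"
  shows "pushforward f W = W"
proof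
  fix t
  have "{r. W r \<noteq> 0 \<and> f r = t} = (if W t \<noteq> 0 then {t} else {})"
    using assms by auto
  then show "pushforward f W t = W t"
    unfolding pushforward_def by auto
qed

lemma pushforward_add_at:
  assumes "finite {r. W r \<noteq> 0}"
  shows "pushforward f (W(a := W a + M)) t = pushforward f W t + (if f a = t then M else 0)"
proof -
  define S where "S = insert a {r. W r \<noteq> 0}"
  have "finite S" "a \<in> S"
    using assms by (auto simp: S_def)
  have "pushforward f (W(a := W a + M)) t = (\<Sum>r | r \<in> S \<and> f r = t. W r + (if r = a then M else 0))"
    using \<open>finite S\<close> by (subst pushforward_eq_sum[of S]) (auto simp: S_def intro!: sum.cong)
  also have "\<dots> = (\<Sum>r | r \<in> S \<and> f r = t. W r) + (if f a = t then M else 0)"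
    using \<open>finite S\<close> \<open>a \<in> S\<close> by (simp add: sum.distrib)
  also have "(\<Sum>r | r \<in> S \<and> f r = t. W r) = pushforward f W t"
    using \<open>finite S\<close> by (intro pushforward_eq_sum[symmetric]) (auto simp: S_def)
  finally show ?thesis .
qed

lemma pushforward_hom:
  assumes "add_submonoid C" "add_hom_on C h" "\<And>r. W r \<in> C" "finite {r. W r \<noteq> 0}"
  shows "h (pushforward f W t) = pushforward f (\<lambda>r. h (W r)) t"
proof -
  have "h 0 = 0"
    using assms(2) by (simp add: add_hom_on_def)
  have "h (pushforward f W t) = (\<Sum>r | W r \<noteq> 0 \<and> f r = t. h (W r))"
    unfolding pushforward_def by (intro add_hom_on_sum[OF assms(1,2)] assms(3))
  also have "\<dots> = pushforward f (\<lambda>r. h (W r)) t"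
    using assms(4) \<open>h 0 = 0\<close> by (subst pushforward_eq_sum[of "{r. W r \<noteq> 0}"]) auto
  finally show ?thesis .
qed

lemma pushforward_pos:
  assumes "pos_comm_monoid C" "\<And>r. W r \<in> C" "finite {r. W r \<noteq> 0}" "W r \<noteq> 0"
  shows "pushforward f W (f r) \<noteq> 0"
proof -
  have "finite {r'. W r' \<noteq> 0 \<and> f r' = f r}"
    by (rule finite_subset[OF _ assms(3)]) auto
  then show ?thesis
    using assms(4) unfolding pushforward_def
    by (subst pos_comm_monoid_sum_eq_0_iff[OF assms(1)]) (auto simp: assms(2))
qed

lemma in_pushforward_mset_iff:
  fixes W :: "'x \<Rightarrow> 'g multiset"
  assumes "finite {r. W r \<noteq> 0}"
  shows "x \<in># pushforward f W t \<longleftrightarrow> (\<exists>r. f r = t \<and> x \<in># W r)"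
proof -
  have "finite {r. W r \<noteq> 0 \<and> f r = t}"
    by (rule finite_subset[OF _ assms]) auto
  then show ?thesis
    by (auto simp: pushforward_def set_mset_sum) (metis empty_iff set_mset_empty)
qed

lemma krelD:
  assumes "krel C X R"
  shows "R t \<in> C" "finite {t. R t \<noteq> 0}" "R t \<noteq> 0 \<Longrightarrow> t \<in> extensional X"
  using assms unfolding krel_def by blast+

lemma krel_mono: "krel C A R \<Longrightarrow> A \<subseteq> B \<Longrightarrow> krel C B R"
  unfolding krel_def extensional_def by blast

lemma krel_pushforward:
  assumes "add_submonoid C" "krel C X W" "\<And>r. W r \<noteq> 0 \<Longrightarrow> f r \<in> extensional Y"
  shows "krel C Y (pushforward f W)"
  unfolding krel_def
proof (intro conjI allI impI)
  show "pushforward f W t \<in> C" for t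
    unfolding pushforward_def by (intro sum_in_add_submonoid[OF assms(1)] krelD(1)[OF assms(2)])
  show "finite {t. pushforward f W t \<noteq> 0}"
    by (intro finite_support_pushforward krelD(2)[OF assms(2)])
  show "t \<in> extensional Y" if "pushforward f W t \<noteq> 0" for t
    using that assms(3) by (metis pushforward_nonzeroE)
qed

lemma krel_marg: "add_submonoid C \<Longrightarrow> krel C X R \<Longrightarrow> krel C Y (marg R Y)"
  unfolding marg_eq_pushforward by (rule krel_pushforward) auto

lemma krel_marg_Int: "add_submonoid C \<Longrightarrow> krel C X R \<Longrightarrow> krel C Y (marg R (X \<inter> Y))"
  by (rule krel_mono[OF krel_marg]) auto

lemma krel_hom:
  assumes "krel C X R" "h 0 = 0"
  shows "krel UNIV X (\<lambda>t. h (R t))"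
proof -
  have "{t. h (R t) \<noteq> 0} \<subseteq> {t. R t \<noteq> 0}"
    using assms(2) by auto
  then have "finite {t. h (R t) \<noteq> 0}"
    using krelD(2)[OF assms(1)] by (rule finite_subset)
  moreover have "t \<in> extensional X" if "h (R t) \<noteq> 0" for t
    using that assms(2) krelD(3)[OF assms(1), of t] by (cases "R t = 0") auto
  ultimately show ?thesis
    unfolding krel_def by blast
qed

lemma marg_marg: "finite {r. W r \<noteq> 0} \<Longrightarrow> marg (marg W A) B = marg W (A \<inter> B)"
  unfolding marg_eq_pushforward by (simp add: pushforward_comp o_def restrict_restrict Int_commute)

lemma marg_marg_subset: "finite {r. W r \<noteq> 0} \<Longrightarrow> B \<subseteq> A \<Longrightarrow> marg (marg W A) B = marg W B"
  by (simp add: marg_marg Int_absorb1)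

lemma marg_self: "krel C X R \<Longrightarrow> marg R X = R"
  unfolding marg_eq_pushforward by (rule pushforward_id) (simp add: krelD(3) extensional_restrict)

lemma marg_hom:
  assumes "add_submonoid C" "add_hom_on C h" "krel C X W"
  shows "marg (\<lambda>r. h (W r)) Y t = h (marg W Y t)"
  unfolding marg_eq_pushforward using assms
  by (intro pushforward_hom[symmetric]) (auto dest: krelD)

lemma marg_pos:
  assumes "pos_comm_monoid C" "krel C X W" "W r \<noteq> 0"
  shows "marg W Y (restrict r Y) \<noteq> 0"
  unfolding marg_eq_pushforward using assms
  by (intro pushforward_pos[of C]) (auto dest: krelD)

lemma pairwise_consistentI:
  assumes "\<And>X. X \<in> H \<Longrightarrow> krel C X (R X)"
    and "\<And>X Y. X \<in> H \<Longrightarrow> Y \<in> H \<Longrightarrow> X \<noteq> Y \<Longrightarrow>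
           \<exists>W. krel C (X \<union> Y) W \<and> marg W X = R X \<and> marg W Y = R Y"
  shows "pairwise_consistent C H R"
  unfolding pairwise_consistent_def
proof (intro ballI)
  fix X Y assume "X \<in> H" "Y \<in> H"
  then show "\<exists>W. krel C (X \<union> Y) W \<and> marg W X = R X \<and> marg W Y = R Y"
    using assms marg_self[OF assms(1)] by (cases "X = Y") (auto intro!: exI[of _ "R X"])
qed

lemma pairwise_consistent_subset:
  "pairwise_consistent C H R \<Longrightarrow> H' \<subseteq> H \<Longrightarrow> pairwise_consistent C H' R"
  unfolding pairwise_consistent_def by blast

lemma pairwise_consistent_marg_Int:
  assumes "pairwise_consistent C H R" "X \<in> H" "Y \<in> H"
  shows "marg (R X) (X \<inter> Y) = marg (R Y) (X \<inter> Y)"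
proof -
  obtain W where W: "krel C (X \<union> Y) W" "marg W X = R X" "marg W Y = R Y"
    using assms unfolding pairwise_consistent_def by blast
  have "marg (R X) (X \<inter> Y) = marg W (X \<inter> Y)"
    using marg_marg[OF krelD(2)[OF W(1)], of X "X \<inter> Y"] W(2) by (simp add: Int_assoc)
  also have "\<dots> = marg (R Y) (X \<inter> Y)"
    using marg_marg[OF krelD(2)[OF W(1)], of Y "X \<inter> Y"] W(3) by (simp add: Int_commute Int_left_commute)
  finally show ?thesis .
qed

lemma globally_consistent_subset:
  assumes "add_submonoid C" "globally_consistent C H R" "H' \<subseteq> H"
  shows "globally_consistent C H' R"
proof -
  obtain W where W: "krel C (\<Union>H) W" "\<And>X. X \<in> H \<Longrightarrow> marg W X = R X"
    using assms(2) unfolding globally_consistent_def by blast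
  have "marg (marg W (\<Union>H')) X = R X" if "X \<in> H'" for X
    using that assms(3) W(2) by (auto simp: marg_marg_subset[OF krelD(2)[OF W(1)]] Union_upper)
  then show ?thesis
    unfolding globally_consistent_def using krel_marg[OF assms(1) W(1)] by blast
qed

lemma globally_consistent_card_le_1:
  assumes "add_submonoid C" "finite H" "card H \<le> 1" "\<And>X. X \<in> H \<Longrightarrow> krel C X (R X)"
  shows "globally_consistent C H R"
proof (cases "H = {}")
  case True
  have "krel C {} (\<lambda>_. 0)"
    using assms(1) by (simp add: krel_def add_submonoid_def)
  with True show ?thesis
    by (auto simp: globally_consistent_def)
next
  case False
  then have "card H = 1"
    using assms(2,3) card_0_eq[OF assms(2)] by linarith
  then obtain X where "H = {X}"
    by (rule card_1_singletonE)
  then show ?thesis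
    unfolding globally_consistent_def using assms(4) marg_self by (auto intro!: exI[of _ "R X"])
qed

lemma globally_consistent_hom:
  assumes "add_submonoid C" "add_hom_on C h" "globally_consistent C H Rs"
    and "\<And>X t. X \<in> H \<Longrightarrow> h (Rs X t) = R X t"
  shows "globally_consistent UNIV H R"
proof -
  obtain W where W: "krel C (\<Union>H) W" "\<And>X. X \<in> H \<Longrightarrow> marg W X = Rs X"
    using assms(3) unfolding globally_consistent_def by blast
  have "krel UNIV (\<Union>H) (\<lambda>r. h (W r))"
    using krel_hom[OF W(1)] assms(2) by (auto simp: add_hom_on_def)
  moreover have "marg (\<lambda>r. h (W r)) X = R X" if "X \<in> H" for X
    using that W(2) assms(4) by (simp add: marg_hom[OF assms(1,2) W(1)] fun_eq_iff)
  ultimately show ?thesis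
    unfolding globally_consistent_def by blast
qed

section \<open>Gluing over the free cover\<close>

definition msets_on :: "'g set \<Rightarrow> 'g multiset set" where
  "msets_on S = {M. set_mset M \<subseteq> S}"

lemma add_submonoid_msets_on: "add_submonoid (msets_on S)"
  by (simp add: add_submonoid_def msets_on_def)

lemma free_carrier_eq: "free_carrier = msets_on (- {0})"
  by (auto simp: free_carrier_def msets_on_def)

lemma is_cover_free:
  assumes "pos_comm_monoid (UNIV :: 'k::comm_monoid_add set)"
  shows "is_cover (free_carrier :: 'k multiset set) free_hom"
proof -
  obtain k :: 'k where "k \<noteq> 0"
    using pos_comm_monoid_ex_nonzero[OF assms] by blast
  then have "\<exists>x\<in>free_carrier. \<exists>y\<in>free_carrier. x \<noteq> (y :: 'k multiset)"
    by (intro bexI[of _ "{#}"] bexI[of _ "{#k#}"]) (auto simp: free_carrier_def)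
  then have "pos_comm_monoid (free_carrier :: 'k multiset set)"
    unfolding pos_comm_monoid_def free_carrier_def by simp
  moreover have "x \<in> free_hom ` free_carrier" for x :: 'k
    by (cases "x = 0") (auto simp: free_hom_def free_carrier_def intro: image_eqI[of _ _ "{#}"] image_eqI[of _ _ "{#x#}"])
  ultimately show ?thesis
    unfolding is_cover_def by (auto simp: free_hom_def)
qed

lemma add_hom_on_free_hom: "add_hom_on C free_hom"
  by (simp add: add_hom_on_def free_hom_def)

lemma consistent_tuplesE:
  assumes "a \<in> extensional X" "b \<in> extensional Y" "restrict a (X \<inter> Y) = restrict b (X \<inter> Y)"
  obtains c where "c \<in> extensional (X \<union> Y)" "restrict c X = a" "restrict c Y = b"
proof
  let ?c = "\<lambda>x. if x \<in> X then a x else b x"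
  have "a x = b x" if "x \<in> X" "x \<in> Y" for x
    using fun_cong[OF assms(3), of x] that by simp
  with assms(1,2) show "?c \<in> extensional (X \<union> Y)" "restrict ?c X = a" "restrict ?c Y = b"
    by (auto simp: extensional_def restrict_def fun_eq_iff)
qed

lemma krel_msets_on_diff:
  assumes "krel (msets_on S) X A"
  shows "krel (msets_on S) X (A(a := A a - M))"
  unfolding krel_def
proof (intro conjI allI impI)
  have supp: "{t. (A(a := A a - M)) t \<noteq> 0} \<subseteq> {t. A t \<noteq> 0}"
    by (auto simp: diff_empty)
  then show "finite {t. (A(a := A a - M)) t \<noteq> 0}"
    using krelD(2)[OF assms] by (rule finite_subset)
  show "(A(a := A a - M)) t \<in> msets_on S" for t
    using krelD(1)[OF assms, of t] by (auto simp: msets_on_def dest: in_diffD)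
  show "t \<in> extensional X" if "(A(a := A a - M)) t \<noteq> 0" for t
    using that supp krelD(3)[OF assms] by blast
qed

lemma krel_msets_on_add:
  assumes "krel (msets_on S) X W" "c \<in> extensional X" "set_mset M \<subseteq> S"
  shows "krel (msets_on S) X (W(c := W c + M))"
  unfolding krel_def
proof (intro conjI allI impI)
  have supp: "{t. (W(c := W c + M)) t \<noteq> 0} \<subseteq> insert c {t. W t \<noteq> 0}"
    by auto
  then show "finite {t. (W(c := W c + M)) t \<noteq> 0}"
    using krelD(2)[OF assms(1)] finite_subset by blast
  show "(W(c := W c + M)) t \<in> msets_on S" for t
    using krelD(1)[OF assms(1), of t] assms(3) by (auto simp: msets_on_def)
  show "t \<in> extensional X" if "(W(c := W c + M)) t \<noteq> 0" for t
    using that supp krelD(3)[OF assms(1)] assms(2) by blast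
qed
lemma marg_mset_matchE:
  fixes A B :: "('a \<Rightarrow> 'v) \<Rightarrow> 'g multiset"
  assumes "finite {r. A r \<noteq> 0}" "finite {r. B r \<noteq> 0}" "marg A I = marg B I" "g \<in># A a"
  obtains b where "g \<in># B b" "restrict b I = restrict a I"
proof -
  have "g \<in># marg A I (restrict a I)"
    unfolding marg_eq_pushforward in_pushforward_mset_iff[OF assms(1)] using assms(4) by blast
  then have "g \<in># marg B I (restrict a I)"
    using assms(3) by simp
  then show ?thesis
    using that by (auto simp: marg_eq_pushforward in_pushforward_mset_iff[OF assms(2)])
qed

lemma marg_mset_zero:
  fixes A B :: "('a \<Rightarrow> 'v) \<Rightarrow> 'g multiset"
  assumes "finite {r. A r \<noteq> 0}" "finite {r. B r \<noteq> 0}" "marg A I = marg B I" "\<And>a. A a = 0"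
  shows "B b = 0"
proof (rule ccontr)
  assume "B b \<noteq> 0"
  then obtain g where "g \<in># B b"
    by (meson multiset_nonemptyE)
  then obtain a where "g \<in># A a" "restrict a I = restrict b I"
    by (rule marg_mset_matchE[OF assms(2,1) assms(3)[symmetric]])
  with assms(4) show False
    by simp
qed

lemma krel_common_elementE:
  fixes A B :: "('a \<Rightarrow> 'v) \<Rightarrow> 'g multiset"
  assumes "krel C X A" "krel C Y B" "marg A (X \<inter> Y) = marg B (X \<inter> Y)" "A a \<noteq> 0"
  obtains g b c where "g \<in># A a" "g \<in># B b" "restrict b (X \<inter> Y) = restrict a (X \<inter> Y)"
    "c \<in> extensional (X \<union> Y)" "restrict c X = a" "restrict c Y = b"
proof -
  obtain g where g: "g \<in># A a"
    using assms(4) by (meson multiset_nonemptyE)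
  then obtain b where b: "g \<in># B b" "restrict b (X \<inter> Y) = restrict a (X \<inter> Y)"
    by (rule marg_mset_matchE[OF krelD(2)[OF assms(1)] krelD(2)[OF assms(2)] assms(3)])
  have "B b \<noteq> 0"
    using b(1) by auto
  then have "a \<in> extensional X" "b \<in> extensional Y"
    using krelD(3)[OF assms(1)] krelD(3)[OF assms(2)] assms(4) by blast+
  then obtain c where "c \<in> extensional (X \<union> Y)" "restrict c X = a" "restrict c Y = b"
    using b(2) by (metis consistent_tuplesE)
  with g b show ?thesis
    by (rule that)
qed

text \<open>Peel a common element \<open>g\<close> off \<open>A\<close> at \<open>a\<close> and off \<open>B\<close> at \<open>b\<close>, glue the rest, and put
  \<open>g\<close> back at the join of \<open>a\<close> and \<open>b\<close>.\<close>

lemma msets_on_glue: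
  fixes A B :: "('a \<Rightarrow> 'v) \<Rightarrow> 'g multiset"
  assumes "krel (msets_on S) X A" "krel (msets_on S) Y B" "marg A (X \<inter> Y) = marg B (X \<inter> Y)"
  shows "\<exists>W. krel (msets_on S) (X \<union> Y) W \<and> marg W X = A \<and> marg W Y = B"
  using assms
  \<comment> \<open>induction on the number of elements of all the multisets \<open>A r\<close> together\<close>
proof (induction "size (pushforward (\<lambda>_. ()) A ())" arbitrary: A B rule: less_induct)
  case less
  note finA = krelD(2)[OF less.prems(1)] and finB = krelD(2)[OF less.prems(2)]
  show ?case
  proof (cases "\<exists>a. A a \<noteq> 0")
    case False
    then have "B b = 0" for b
      using marg_mset_zero[OF finA finB less.prems(3)] by blast
    then show ?thesis
      using False by (intro exI[of _ "\<lambda>_. 0"]) (auto simp: krel_def msets_on_def marg_def)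
  next
    case True
    then obtain a g b c where g: "g \<in># A a" "g \<in># B b" "restrict b (X \<inter> Y) = restrict a (X \<inter> Y)"
      and c: "c \<in> extensional (X \<union> Y)" "restrict c X = a" "restrict c Y = b"
      using krel_common_elementE[OF less.prems] by metis
    define A' where "A' = A(a := A a - {#g#})"
    define B' where "B' = B(b := B b - {#g#})"
    have A: "A = A'(a := A' a + {#g#})" and B: "B = B'(b := B' b + {#g#})"
      using g(1,2) by (auto simp: A'_def B'_def)
    have "krel (msets_on S) X A'" "krel (msets_on S) Y B'"
      using less.prems(1,2) unfolding A'_def B'_def by (auto intro: krel_msets_on_diff)
    note finA' = krelD(2)[OF this(1)] and finB' = krelD(2)[OF this(2)]
    have add_g: "pushforward f A t = pushforward f A' t + (if f a = t then {#g#} else 0)"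
      "pushforward f B t = pushforward f B' t + (if f b = t then {#g#} else 0)"
      for f :: "('a \<Rightarrow> 'v) \<Rightarrow> 'z" and t
      by (subst A, rule pushforward_add_at[OF finA'], subst B, rule pushforward_add_at[OF finB'])
    have "marg A' (X \<inter> Y) = marg B' (X \<inter> Y)"
      using less.prems(3) g(3) unfolding marg_eq_pushforward fun_eq_iff add_g by simp
    moreover have "size (pushforward (\<lambda>_. ()) A' ()) < size (pushforward (\<lambda>_. ()) A ())"
      by (simp add: add_g)
    ultimately obtain W' where W': "krel (msets_on S) (X \<union> Y) W'" "marg W' X = A'" "marg W' Y = B'"
      using less.hyps \<open>krel (msets_on S) X A'\<close> \<open>krel (msets_on S) Y B'\<close> by blast
    define W where "W = W'(c := W' c + {#g#})"
    have "g \<in> S"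
      using g(1) krelD(1)[OF less.prems(1), of a] by (auto simp: msets_on_def)
    then have "krel (msets_on S) (X \<union> Y) W"
      unfolding W_def by (intro krel_msets_on_add[OF W'(1) c(1)]) simp
    moreover have "marg W X t = A t" "marg W Y t = B t" for t
      unfolding W_def marg_eq_pushforward pushforward_add_at[OF krelD(2)[OF W'(1)]]
      using W'(2,3) c(2,3) by (simp_all add: A B marg_eq_pushforward)
    ultimately show ?thesis
      by (blast intro: ext)
  qed
qed

section \<open>Join trees and ears\<close>

definition walk_connected :: "'n set \<Rightarrow> 'n set set \<Rightarrow> bool" where
  "walk_connected V E \<longleftrightarrow> (\<forall>x\<in>V. \<forall>y\<in>V. \<exists>p. gwalk V E p \<and> hd p = x \<and> last p = y)"

lemma is_tree_iff:
  "is_tree V E \<longleftrightarrow> finite V \<and> V \<noteq> {} \<and> E \<subseteq> {{x, y} | x y. x \<in> V \<and> y \<in> V \<and> x \<noteq> y}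
     \<and> walk_connected V E \<and> card E + 1 = card V"
  by (simp add: is_tree_def walk_connected_def)

lemma is_join_tree_iff: "is_join_tree H E \<longleftrightarrow> is_tree H E \<and> (\<forall>a. walk_connected {Z\<in>H. a \<in> Z} E)"
  unfolding is_join_tree_def walk_connected_def by blast

lemma tree_edgeE:
  assumes "is_tree V E" "e \<in> E"
  obtains x y where "e = {x, y}" "x \<in> V" "y \<in> V" "x \<noteq> y"
  using assms unfolding is_tree_def by blast

lemma finite_tree_edges: "is_tree V E \<Longrightarrow> finite E"
  by (rule finite_subset[of _ "Pow V"]) (auto simp: is_tree_def)

lemma gwalk_Nil [simp]: "\<not> gwalk V E []"
  by (simp add: gwalk_def)

lemma gwalk_singleton [simp]: "gwalk V E [x] \<longleftrightarrow> x \<in> V"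
  by (simp add: gwalk_def)

lemma gwalk_Cons: "gwalk V E (x # q) \<longleftrightarrow> x \<in> V \<and> (q = [] \<or> {x, hd q} \<in> E \<and> gwalk V E q)"
  unfolding gwalk_def
  by (cases q) (auto simp: nth_Cons' less_Suc_eq_0_disj split: if_splits)

lemma gwalk_hd_in: "gwalk V E p \<Longrightarrow> hd p \<in> V"
  unfolding gwalk_def by (cases p) auto

lemma gwalk_mono: "gwalk V E p \<Longrightarrow> V \<subseteq> V' \<Longrightarrow> E \<subseteq> E' \<Longrightarrow> gwalk V' E' p"
  unfolding gwalk_def by blast

lemma gwalk_append:
  "gwalk V E p \<Longrightarrow> gwalk V E q \<Longrightarrow> {last p, hd q} \<in> E \<Longrightarrow> gwalk V E (p @ q)"
proof (induction p)
  case (Cons x p)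
  then show ?case
    by (cases "p = []") (auto simp: gwalk_Cons)
qed simp

lemma walk_connected_subsingleton: "V \<subseteq> {x} \<Longrightarrow> walk_connected V E"
  unfolding walk_connected_def by (auto intro!: exI[of _ "[x]"])

lemma walk_connected_mono:
  assumes "walk_connected V E" "E \<subseteq> E'"
  shows "walk_connected V E'"
  using assms gwalk_mono unfolding walk_connected_def by blast

lemma walk_connected_insert:
  assumes "walk_connected S E" "X \<in> S" "{X, Y} \<in> E'" "E \<subseteq> E'"
  shows "walk_connected (insert Y S) E'"
  unfolding walk_connected_def
proof (intro ballI)
  have walk: "\<exists>p. gwalk (insert Y S) E' p \<and> hd p = x \<and> last p = y" if "x \<in> S" "y \<in> S" for x y
    using assms(1,4) that gwalk_mono[of S E _ "insert Y S" E'] unfolding walk_connected_def by blast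
  have edge: "{Y, X} \<in> E'" "{X, Y} \<in> E'"
    using assms(3) by (simp_all add: insert_commute)
  fix x y assume "x \<in> insert Y S" "y \<in> insert Y S"
  then consider "x = Y" "y = Y" | "x = Y" "y \<in> S" | "x \<in> S" "y = Y" | "x \<in> S" "y \<in> S"
    by blast
  then show "\<exists>p. gwalk (insert Y S) E' p \<and> hd p = x \<and> last p = y"
  proof cases
    case 1
    then show ?thesis
      by (intro exI[of _ "[Y]"]) simp
  next
    case 2
    obtain p where "gwalk (insert Y S) E' p" "hd p = X" "last p = y"
      using walk[OF assms(2) 2(2)] by blast
    moreover have "p \<noteq> []"
      using \<open>gwalk (insert Y S) E' p\<close> by auto
    ultimately show ?thesis
      using 2 edge by (intro exI[of _ "Y # p"]) (simp add: gwalk_Cons)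
  next
    case 3
    obtain p where "gwalk (insert Y S) E' p" "hd p = x" "last p = X"
      using walk[OF 3(1) assms(2)] by blast
    moreover have "p \<noteq> []"
      using \<open>gwalk (insert Y S) E' p\<close> by auto
    ultimately show ?thesis
      using 3 edge gwalk_append[of "insert Y S" E' p "[Y]"] by (intro exI[of _ "p @ [Y]"]) simp
  qed (use walk in blast)
qed

lemma gwalk_avoid_leaf:
  assumes "gwalk V E p" "\<forall>e\<in>E. L \<in> e \<longrightarrow> e = {L, P}" "L \<noteq> P" "last p \<noteq> L"
  shows "\<exists>q. gwalk (V - {L}) (E - {{L, P}}) q \<and> hd q = (if hd p = L then P else hd p) \<and> last q = last p"
  using assms(1,4)
proof (induction p)
  case (Cons x p)
  show ?case
  proof (cases "p = []")
    case True
    then show ?thesis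
      using Cons.prems by (intro exI[of _ "[x]"]) simp
  next
    case False
    have p: "gwalk V E p" "x \<in> V" "{x, hd p} \<in> E" "last p \<noteq> L"
      using Cons.prems False by (auto simp: gwalk_Cons)
    obtain q where q: "gwalk (V - {L}) (E - {{L, P}}) q"
      "hd q = (if hd p = L then P else hd p)" "last q = last p"
      using Cons.IH[OF p(1,4)] by blast
    have "q \<noteq> []"
      using q(1) by auto
    consider "x = L" | "hd p = L" | "x \<noteq> L" "hd p \<noteq> L"
      by blast
    then show ?thesis
    proof cases
      case 1
      then have "{L, hd p} = {L, P}"
        using assms(2)[rule_format, OF p(3)] by simp
      then have "hd p = P"
        using assms(3) by (auto simp: doubleton_eq_iff)
      then show ?thesis
        using 1 q False assms(3) by (intro exI[of _ q]) simp
    next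
      case 2
      then have "{x, L} = {L, P}"
        using assms(2)[rule_format, OF p(3)] by simp
      then have "x = P"
        using assms(3) by (auto simp: doubleton_eq_iff)
      then show ?thesis
        using 2 q False assms(3) by (intro exI[of _ q]) simp
    next
      case 3
      have "{x, hd p} \<noteq> {L, P}"
      proof
        assume "{x, hd p} = {L, P}"
        then have "L \<in> {x, hd p}"
          by simp
        with 3 show False
          by simp
      qed
      then have "{x, hd q} \<in> E - {{L, P}}"
        using p(3) q(2) 3 by simp
      then show ?thesis
        using 3 q p(2) \<open>q \<noteq> []\<close> False by (intro exI[of _ "x # q"]) (simp add: gwalk_Cons)
    qed
  qed
qed simp

lemma walk_connected_remove_leaf:
  assumes "walk_connected V E" "\<forall>e\<in>E. L \<in> e \<longrightarrow> e = {L, P}" "L \<noteq> P"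
  shows "walk_connected (V - {L}) (E - {{L, P}})"
  unfolding walk_connected_def
proof (intro ballI)
  fix x y assume "x \<in> V - {L}" "y \<in> V - {L}"
  then obtain p where p: "gwalk V E p" "hd p = x" "last p = y"
    using assms(1) unfolding walk_connected_def by blast
  then have "last p \<noteq> L" "hd p \<noteq> L"
    using \<open>x \<in> V - {L}\<close> \<open>y \<in> V - {L}\<close> by auto
  then show "\<exists>q. gwalk (V - {L}) (E - {{L, P}}) q \<and> hd q = x \<and> last q = y"
    using gwalk_avoid_leaf[OF p(1) assms(2,3)] p(2,3) by simp
qed

lemma tree_degree_sum:
  assumes T: "is_tree V E"
  shows "(\<Sum>x\<in>V. card {e\<in>E. x \<in> e}) = 2 * card E"
proof -
  have "finite V" "finite E"
    using T finite_tree_edges by (auto simp: is_tree_def)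
  have "(\<Sum>x\<in>V. card {e\<in>E. x \<in> e}) = (\<Sum>e\<in>E. 2)"
  proof (rule sum_multicount_gen[OF \<open>finite V\<close> \<open>finite E\<close>], intro ballI)
    fix e assume "e \<in> E"
    then obtain x y where "e = {x, y}" "x \<in> V" "y \<in> V" "x \<noteq> y"
      by (rule tree_edgeE[OF T])
    then have "{z\<in>V. z \<in> e} = e"
      by blast
    then show "card {z\<in>V. z \<in> e} = 2"
      using \<open>e = {x, y}\<close> \<open>x \<noteq> y\<close> by simp
  qed
  then show ?thesis
    by simp
qed

lemma tree_degree_pos:
  assumes T: "is_tree V E" and two: "2 \<le> card V" and "x \<in> V"
  shows "card {e\<in>E. x \<in> e} \<noteq> 0"
proof -
  have "card (V - {x}) \<noteq> 0"
    using two \<open>x \<in> V\<close> by (simp add: card_Diff_singleton)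
  then have "V - {x} \<noteq> {}"
    by (metis card.empty)
  then obtain y where "y \<in> V" "y \<noteq> x"
    by blast
  then obtain p where p: "gwalk V E p" "hd p = x" "last p = y"
    using T \<open>x \<in> V\<close> unfolding is_tree_iff walk_connected_def by blast
  then obtain q where "p = x # q" "q \<noteq> []"
    using \<open>y \<noteq> x\<close> by (cases p) (auto split: if_splits)
  then have "{x, hd q} \<in> {e\<in>E. x \<in> e}"
    using p(1) by (simp add: gwalk_Cons)
  then show ?thesis
    using finite_tree_edges[OF T] by auto
qed

lemma tree_degree_1E:
  assumes T: "is_tree V E" and "card {e\<in>E. L \<in> e} = 1"
  obtains P where "L \<noteq> P" "{L, P} \<in> E" "\<forall>e\<in>E. L \<in> e \<longrightarrow> e = {L, P}"
proof -
  obtain e0 where e0: "{e\<in>E. L \<in> e} = {e0}"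
    using assms(2) by (rule card_1_singletonE)
  then have "e0 \<in> {e\<in>E. L \<in> e}"
    by simp
  then have "e0 \<in> E" "L \<in> e0"
    by simp_all
  then obtain x y where "e0 = {x, y}" "x \<noteq> y"
    by (metis tree_edgeE[OF T])
  then obtain P where "e0 = {L, P}" "L \<noteq> P"
    using \<open>L \<in> e0\<close> by (metis insert_commute insert_iff singletonD)
  moreover have "e = e0" if "e \<in> E" "L \<in> e" for e
  proof -
    have "e \<in> {e\<in>E. L \<in> e}"
      using that by simp
    then show ?thesis
      unfolding e0 by simp
  qed
  ultimately show ?thesis
    using that \<open>e0 \<in> E\<close> by blast
qed

lemma tree_has_leaf:
  assumes T: "is_tree V E" and two: "2 \<le> card V"
  obtains L P where "L \<in> V" "L \<noteq> P" "{L, P} \<in> E" "\<forall>e\<in>E. L \<in> e \<longrightarrow> e = {L, P}"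
proof -
  have "card E + 1 = card V"
    using T unfolding is_tree_def by blast
  then have less: "(\<Sum>x\<in>V. card {e\<in>E. x \<in> e}) < (\<Sum>x\<in>V. 2)"
    unfolding tree_degree_sum[OF T] by simp
  have "\<exists>L\<in>V. card {e\<in>E. L \<in> e} < 2"
  proof (rule ccontr)
    assume "\<not> (\<exists>L\<in>V. card {e\<in>E. L \<in> e} < 2)"
    then have "(\<Sum>x\<in>V. 2) \<le> (\<Sum>x\<in>V. card {e\<in>E. x \<in> e})"
      by (intro sum_mono) (simp add: not_less)
    with less show False
      by simp
  qed
  then obtain L where "L \<in> V" "card {e\<in>E. L \<in> e} < 2"
    by blast
  then have "card {e\<in>E. L \<in> e} = 1"
    using tree_degree_pos[OF T two] by fastforce
  then show ?thesis
    using that \<open>L \<in> V\<close> by (metis tree_degree_1E[OF T])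
qed

lemma tree_edge_subset: "is_tree V E \<Longrightarrow> e \<in> E \<Longrightarrow> e \<subseteq> V"
  by (metis tree_edgeE empty_subsetI insert_subset)

lemma tree_remove_leaf:
  assumes T: "is_tree V E" and two: "2 \<le> card V"
    and leaf: "L \<in> V" "L \<noteq> P" "{L, P} \<in> E" "\<forall>e\<in>E. L \<in> e \<longrightarrow> e = {L, P}"
  shows "is_tree (V - {L}) (E - {{L, P}})"
proof -
  have "P \<in> V"
    using tree_edge_subset[OF T leaf(3)] by simp
  have edges: "E - {{L, P}} \<subseteq> {{x, y} | x y. x \<in> V - {L} \<and> y \<in> V - {L} \<and> x \<noteq> y}"
  proof
    fix e assume e: "e \<in> E - {{L, P}}"
    then obtain x y where "e = {x, y}" "x \<in> V" "y \<in> V" "x \<noteq> y"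
      using tree_edgeE[OF T] by blast
    moreover have "L \<notin> e"
      using e leaf(4) by blast
    ultimately show "e \<in> {{x, y} | x y. x \<in> V - {L} \<and> y \<in> V - {L} \<and> x \<noteq> y}"
      by blast
  qed
  have "finite V" "card E + 1 = card V"
    using T by (simp_all add: is_tree_def)
  then have "card (E - {{L, P}}) + 1 = card (V - {L})"
    using finite_tree_edges[OF T] leaf(1,3) two by simp
  moreover have "walk_connected (V - {L}) (E - {{L, P}})"
    using T leaf(2,4) by (simp add: is_tree_iff walk_connected_remove_leaf)
  moreover have "finite (V - {L})" "V - {L} \<noteq> {}"
    using \<open>finite V\<close> \<open>P \<in> V\<close> leaf(2) by auto
  ultimately show ?thesis
    using edges unfolding is_tree_iff by blast
qed

lemma tree_add_leaf:
  assumes T: "is_tree V E" and "X \<in> V" "Y \<notin> V"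
  shows "is_tree (insert Y V) (insert {Y, X} E)"
proof -
  have "{Y, X} \<notin> E"
    using tree_edge_subset[OF T] \<open>Y \<notin> V\<close> by blast
  moreover have "finite V" "card E + 1 = card V" "walk_connected V E"
    "E \<subseteq> {{x, y} | x y. x \<in> V \<and> y \<in> V \<and> x \<noteq> y}"
    using T by (simp_all add: is_tree_iff)
  ultimately have "finite (insert Y V)" "card (insert {Y, X} E) + 1 = card (insert Y V)"
    using finite_tree_edges[OF T] \<open>Y \<notin> V\<close> by simp_all
  moreover have "insert {Y, X} E \<subseteq> {{x, y} | x y. x \<in> insert Y V \<and> y \<in> insert Y V \<and> x \<noteq> y}"
  proof (intro insert_subsetI subsetI)
    show "{Y, X} \<in> {{x, y} | x y. x \<in> insert Y V \<and> y \<in> insert Y V \<and> x \<noteq> y}"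
      using \<open>X \<in> V\<close> \<open>Y \<notin> V\<close> by (intro CollectI exI[of _ Y] exI[of _ X]) auto
    fix e assume "e \<in> E"
    then obtain x y where "e = {x, y}" "x \<in> V" "y \<in> V" "x \<noteq> y"
      by (rule tree_edgeE[OF T])
    then show "e \<in> {{x, y} | x y. x \<in> insert Y V \<and> y \<in> insert Y V \<and> x \<noteq> y}"
      by (intro CollectI exI[of _ x] exI[of _ y]) simp
  qed
  moreover have "walk_connected (insert Y V) (insert {Y, X} E)"
    using \<open>walk_connected V E\<close> \<open>X \<in> V\<close> by (rule walk_connected_insert) (auto simp: insert_commute)
  ultimately show ?thesis
    unfolding is_tree_iff by blast
qed

definition is_ear :: "'a set set \<Rightarrow> 'a set \<Rightarrow> 'a set \<Rightarrow> bool" where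
  "is_ear H Y X \<longleftrightarrow> Y \<in> H \<and> X \<in> H \<and> X \<noteq> Y \<and> Y \<inter> \<Union>(H - {Y}) \<subseteq> X"

lemma join_tree_leaf_is_ear:
  assumes J: "is_join_tree H E" and leaf: "L \<in> H" "L \<noteq> P" "{L, P} \<in> E" "\<forall>e\<in>E. L \<in> e \<longrightarrow> e = {L, P}"
  shows "is_ear H L P"
  unfolding is_ear_def
proof (intro conjI subsetI)
  have "is_tree H E"
    using J by (simp add: is_join_tree_iff)
  then show "P \<in> H"
    using tree_edge_subset leaf(3) by blast
  fix a assume "a \<in> L \<inter> \<Union>(H - {L})"
  then obtain Z where "a \<in> L" "Z \<in> H" "Z \<noteq> L" "a \<in> Z"
    by blast
  then obtain p where p: "gwalk {Z\<in>H. a \<in> Z} E p" "hd p = L" "last p = Z"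
    using J leaf(1) unfolding is_join_tree_def by blast
  then obtain q where "p = L # q" "q \<noteq> []"
    using \<open>Z \<noteq> L\<close> by (cases p) (auto split: if_splits)
  then have "{L, hd q} \<in> E" "hd q \<in> {Z\<in>H. a \<in> Z}"
    using p(1) by (auto simp: gwalk_Cons dest: gwalk_hd_in)
  moreover have "hd q = P"
  proof -
    have "{L, hd q} = {L, P}"
      using leaf(4) \<open>{L, hd q} \<in> E\<close> by simp
    then show ?thesis
      using leaf(2) by (metis doubleton_eq_iff)
  qed
  ultimately show "a \<in> P"
    by simp
qed (use leaf in simp_all)

lemma join_tree_remove_leaf:
  assumes J: "is_join_tree H E" and two: "2 \<le> card H"
    and leaf: "L \<in> H" "L \<noteq> P" "{L, P} \<in> E" "\<forall>e\<in>E. L \<in> e \<longrightarrow> e = {L, P}"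
  shows "is_join_tree (H - {L}) (E - {{L, P}})"
proof -
  have "is_tree H E" and conn: "\<And>a. walk_connected {Z\<in>H. a \<in> Z} E"
    using J by (auto simp: is_join_tree_iff)
  moreover have "{Z\<in>H - {L}. a \<in> Z} = {Z\<in>H. a \<in> Z} - {L}" for a
    by blast
  ultimately show ?thesis
    unfolding is_join_tree_iff
    using tree_remove_leaf[OF _ two leaf] walk_connected_remove_leaf[OF conn leaf(4,2)] by simp
qed

lemma join_tree_add_ear:
  assumes J: "is_join_tree (H - {Y}) E" and ear: "is_ear H Y X"
  shows "is_join_tree H (insert {Y, X} E)"
proof -
  have T: "is_tree (H - {Y}) E" and conn: "\<And>a. walk_connected {Z\<in>H - {Y}. a \<in> Z} E"
    using J by (auto simp: is_join_tree_iff)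
  have "Y \<in> H" "X \<in> H - {Y}" "Y \<inter> \<Union>(H - {Y}) \<subseteq> X"
    using ear by (auto simp: is_ear_def)
  have edge: "{X, Y} \<in> insert {Y, X} E"
    by (simp add: insert_commute)
  have "walk_connected {Z\<in>H. a \<in> Z} (insert {Y, X} E)" for a
  proof (cases "a \<in> Y")
    case False
    then have eq: "{Z\<in>H. a \<in> Z} = {Z\<in>H - {Y}. a \<in> Z}"
      by auto
    show ?thesis
      unfolding eq by (rule walk_connected_mono[OF conn]) (rule subset_insertI)
  next
    case True
    then have eq: "{Z\<in>H. a \<in> Z} = insert Y {Z\<in>H - {Y}. a \<in> Z}"
      using \<open>Y \<in> H\<close> by blast
    show ?thesis
    proof (cases "{Z\<in>H - {Y}. a \<in> Z} = {}")
      case True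
      show ?thesis
        unfolding eq True by (rule walk_connected_subsingleton) simp
    next
      case False
      then have "X \<in> {Z\<in>H - {Y}. a \<in> Z}"
        using \<open>a \<in> Y\<close> \<open>X \<in> H - {Y}\<close> \<open>Y \<inter> \<Union>(H - {Y}) \<subseteq> X\<close> by blast
      then show ?thesis
        unfolding eq by (rule walk_connected_insert[OF conn _ edge]) blast
    qed
  qed
  moreover have "is_tree (insert Y (H - {Y})) (insert {Y, X} E)"
    by (rule tree_add_leaf[OF T \<open>X \<in> H - {Y}\<close>]) simp
  ultimately show ?thesis
    unfolding is_join_tree_iff insert_Diff[OF \<open>Y \<in> H\<close>] by blast
qed

lemma acyclic_finite: "hg_acyclic H \<Longrightarrow> finite H"
  unfolding hg_acyclic_def is_join_tree_iff is_tree_iff by (blast intro: finite.emptyI)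

lemma acyclic_if_card_le_1:
  assumes "finite H" "card H \<le> 1"
  shows "hg_acyclic H"
proof (cases "H = {}")
  case False
  then have "card H = 1"
    using assms card_0_eq[OF assms(1)] by linarith
  then obtain X where "H = {X}"
    by (rule card_1_singletonE)
  moreover have "is_tree {X} {}"
    unfolding is_tree_iff by (simp add: walk_connected_subsingleton)
  moreover have "walk_connected {Z\<in>{X}. a \<in> Z} {}" for a
    by (rule walk_connected_subsingleton[of _ X]) blast
  ultimately show ?thesis
    unfolding hg_acyclic_def is_join_tree_iff by blast
qed (simp add: hg_acyclic_def)

lemma acyclic_ear_decomposition:
  assumes "hg_acyclic H" "2 \<le> card H"
  obtains Y X where "is_ear H Y X" "hg_acyclic (H - {Y})"
proof -
  have "H \<noteq> {}"
    using assms(2) by auto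
  then obtain E where J: "is_join_tree H E"
    using assms(1) unfolding hg_acyclic_def by blast
  then have "is_tree H E"
    by (simp add: is_join_tree_iff)
  then obtain L P where leaf: "L \<in> H" "L \<noteq> P" "{L, P} \<in> E" "\<forall>e\<in>E. L \<in> e \<longrightarrow> e = {L, P}"
    using assms(2) by (rule tree_has_leaf)
  have "is_ear H L P"
    by (rule join_tree_leaf_is_ear[OF J leaf])
  moreover have "hg_acyclic (H - {L})"
    unfolding hg_acyclic_def using join_tree_remove_leaf[OF J assms(2) leaf] by blast
  ultimately show ?thesis
    by (rule that)
qed

lemma acyclic_add_ear:
  assumes "hg_acyclic (H - {Y})" "is_ear H Y X"
  shows "hg_acyclic H"
proof -
  have "X \<in> H - {Y}"
    using assms(2) by (auto simp: is_ear_def)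
  then obtain E where "is_join_tree (H - {Y}) E"
    using assms(1) unfolding hg_acyclic_def by blast
  then show ?thesis
    unfolding hg_acyclic_def using join_tree_add_ear assms(2) by blast
qed

lemma msets_on_globally_consistent_add_ear:
  assumes ear: "is_ear H Y X" and kr: "\<And>Z. Z \<in> H \<Longrightarrow> krel (msets_on S) Z (R Z)"
    and pc: "pairwise_consistent (msets_on S) H R"
    and glob: "globally_consistent (msets_on S) (H - {Y}) R"
  shows "globally_consistent (msets_on S) H R"
proof -
  define U where "U = \<Union>(H - {Y})"
  obtain W' where W': "krel (msets_on S) U W'" "\<And>Z. Z \<in> H - {Y} \<Longrightarrow> marg W' Z = R Z"
    using glob unfolding globally_consistent_def U_def by blast
  have "X \<in> H - {Y}" "X \<in> H" "Y \<in> H" "U \<inter> Y \<subseteq> X \<inter> Y"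
    using ear by (auto simp: is_ear_def U_def)
  note fin = krelD(2)[OF W'(1)] krelD(2)[OF kr[OF \<open>X \<in> H\<close>]] krelD(2)[OF kr[OF \<open>Y \<in> H\<close>]]
  have "marg W' (U \<inter> Y) = marg (marg W' X) (U \<inter> Y)"
    using \<open>U \<inter> Y \<subseteq> X \<inter> Y\<close> by (simp add: marg_marg_subset[OF fin(1)])
  also have "\<dots> = marg (marg (R X) (X \<inter> Y)) (U \<inter> Y)"
    using W'(2)[OF \<open>X \<in> H - {Y}\<close>] \<open>U \<inter> Y \<subseteq> X \<inter> Y\<close> by (simp add: marg_marg_subset[OF fin(2)])
  also have "\<dots> = marg (marg (R Y) (X \<inter> Y)) (U \<inter> Y)"
    using pairwise_consistent_marg_Int[OF pc \<open>X \<in> H\<close> \<open>Y \<in> H\<close>] by simp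
  also have "\<dots> = marg (R Y) (U \<inter> Y)"
    using \<open>U \<inter> Y \<subseteq> X \<inter> Y\<close> by (simp add: marg_marg_subset[OF fin(3)])
  finally obtain W where W: "krel (msets_on S) (U \<union> Y) W" "marg W U = W'" "marg W Y = R Y"
    using msets_on_glue[OF W'(1) kr[OF \<open>Y \<in> H\<close>]] by blast
  have "marg W Z = R Z" if "Z \<in> H" for Z
  proof (cases "Z = Y")
    case False
    then have "Z \<subseteq> U"
      using that by (auto simp: U_def)
    then have "marg W Z = marg (marg W U) Z"
      by (simp add: marg_marg_subset[OF krelD(2)[OF W(1)]])
    then show ?thesis
      using W'(2) W(2) that False by simp
  qed (use W(3) in simp)
  moreover have "U \<union> Y = \<Union>H"
    using \<open>Y \<in> H\<close> by (auto simp: U_def)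
  ultimately show ?thesis
    using W(1) unfolding globally_consistent_def by auto
qed

lemma acyclic_pairwise_imp_globally_consistent:
  assumes "hg_acyclic H" "\<And>X. X \<in> H \<Longrightarrow> krel (msets_on S) X (R X)"
    and "pairwise_consistent (msets_on S) H R"
  shows "globally_consistent (msets_on S) H R"
  using assms
proof (induction "card H" arbitrary: H rule: less_induct)
  case less
  have "finite H"
    using less.prems(1) by (rule acyclic_finite)
  show ?case
  proof (cases "card H \<le> 1")
    case True
    then show ?thesis
      using globally_consistent_card_le_1[OF add_submonoid_msets_on \<open>finite H\<close>] less.prems(2) by blast
  next
    case False
    then have "2 \<le> card H"
      by simp
    then obtain Y X where ear: "is_ear H Y X" "hg_acyclic (H - {Y})"
      by (rule acyclic_ear_decomposition[OF less.prems(1)])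
    then have "Y \<in> H"
      by (simp add: is_ear_def)
    then have "card (H - {Y}) < card H"
      by (rule card_Diff1_less[OF \<open>finite H\<close>])
    moreover have "pairwise_consistent (msets_on S) (H - {Y}) R"
      using less.prems(3) by (rule pairwise_consistent_subset) blast
    ultimately have "globally_consistent (msets_on S) (H - {Y}) R"
      by (intro less.hyps[OF _ ear(2)]) (simp_all add: less.prems(2))
    then show ?thesis
      using msets_on_globally_consistent_add_ear[OF ear(1) less.prems(2,3)] by blast
  qed
qed

lemma acyclic_imp_lgc_free:
  assumes "hg_acyclic H"
  shows "lgc_up_to TYPE('v) (free_carrier :: 'k::comm_monoid_add multiset set) free_hom H"
  unfolding lgc_up_to_def
proof (intro allI impI)
  fix R :: "'a set \<Rightarrow> ('a \<Rightarrow> 'v) \<Rightarrow> 'k"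
  assume "\<exists>Rs. (\<forall>X\<in>H. krel free_carrier X (Rs X) \<and> (\<forall>t. free_hom (Rs X t) = R X t))
              \<and> pairwise_consistent free_carrier H Rs"
  then obtain Rs where Rs: "\<And>X. X \<in> H \<Longrightarrow> krel free_carrier X (Rs X)"
    "\<And>X t. X \<in> H \<Longrightarrow> free_hom (Rs X t) = R X t" "pairwise_consistent free_carrier H Rs"
    by blast
  have "globally_consistent free_carrier H Rs"
    unfolding free_carrier_eq
    by (rule acyclic_pairwise_imp_globally_consistent[OF assms]) (use Rs(1,3) in \<open>simp_all add: free_carrier_eq\<close>)
  then show "globally_consistent UNIV H R"
    unfolding free_carrier_eq
    by (rule globally_consistent_hom[OF add_submonoid_msets_on add_hom_on_free_hom _ Rs(2)])
qed

section \<open>Removing an ear\<close>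

lemma consistent_pair_restrict:
  assumes C: "add_submonoid C" and V: "krel C (X \<union> Z) V" "marg V X = R" "marg V Z = S"
    and "Z \<inter> Y \<subseteq> X"
  shows "\<exists>W. krel C (Y \<union> Z) W \<and> marg W Y = marg R (X \<inter> Y) \<and> marg W Z = S"
proof (intro exI conjI)
  note fin = krelD(2)[OF V(1)]
  show "krel C (Y \<union> Z) (marg V (X \<inter> Y \<union> Z))"
    by (rule krel_mono[OF krel_marg[OF C V(1)]]) blast
  have "(X \<inter> Y \<union> Z) \<inter> Y = X \<inter> Y"
    using \<open>Z \<inter> Y \<subseteq> X\<close> by blast
  then show "marg (marg V (X \<inter> Y \<union> Z)) Y = marg R (X \<inter> Y)"
    using V(2) by (simp add: marg_marg[OF fin] marg_marg_subset[OF fin, of "X \<inter> Y" X, symmetric])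
  show "marg (marg V (X \<inter> Y \<union> Z)) Z = S"
    using V(3) by (simp add: marg_marg_subset[OF fin])
qed

lemma pairwise_consistent_add_ear:
  assumes C: "add_submonoid C" and ear: "is_ear H Y X"
    and kr: "\<And>Z. Z \<in> H - {Y} \<Longrightarrow> krel C Z (R Z)" and pc: "pairwise_consistent C (H - {Y}) R"
  shows "pairwise_consistent C H (R(Y := marg (R X) (X \<inter> Y)))" (is "pairwise_consistent C H ?R")
proof -
  have "X \<in> H - {Y}" "Y \<in> H" "Y \<inter> \<Union>(H - {Y}) \<subseteq> X"
    using ear by (auto simp: is_ear_def)
  have kY: "krel C Y (?R Y)"
    using krel_marg_Int[OF C kr[OF \<open>X \<in> H - {Y}\<close>]] by simp
  have glue: "\<exists>W. krel C (Y \<union> Z) W \<and> marg W Y = ?R Y \<and> marg W Z = ?R Z" if Z: "Z \<in> H - {Y}" for Z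
  proof -
    obtain V where V: "krel C (X \<union> Z) V" "marg V X = R X" "marg V Z = R Z"
      using pc \<open>X \<in> H - {Y}\<close> Z unfolding pairwise_consistent_def by blast
    moreover have "Z \<inter> Y \<subseteq> X"
      using Z \<open>Y \<inter> \<Union>(H - {Y}) \<subseteq> X\<close> by blast
    ultimately show ?thesis
      using consistent_pair_restrict[OF C] Z by simp
  qed
  show ?thesis
  proof (rule pairwise_consistentI)
    show "krel C Z (?R Z)" if "Z \<in> H" for Z
      using that kY kr by (cases "Z = Y") simp_all
    fix A B assume "A \<in> H" "B \<in> H" "A \<noteq> B"
    then consider "A = Y" "B \<in> H - {Y}" | "B = Y" "A \<in> H - {Y}" | "A \<in> H - {Y}" "B \<in> H - {Y}"
      by blast
    then show "\<exists>W. krel C (A \<union> B) W \<and> marg W A = ?R A \<and> marg W B = ?R B"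
    proof cases
      case 1
      then show ?thesis
        using glue by simp
    next
      case 2
      then show ?thesis
        using glue[of A] by (simp add: Un_commute conj_commute)
    next
      case 3
      then show ?thesis
        using pc unfolding pairwise_consistent_def by simp
    qed
  qed
qed

lemma lgc_remove_ear:
  fixes h :: "'c::comm_monoid_add \<Rightarrow> 'k::comm_monoid_add"
  assumes C: "add_submonoid C" and h: "add_hom_on C h" and ear: "is_ear H Y X"
    and lgc: "lgc_up_to TYPE('v) C h H"
  shows "lgc_up_to TYPE('v) C h (H - {Y})"
  unfolding lgc_up_to_def
proof (intro allI impI)
  fix R :: "'a set \<Rightarrow> ('a \<Rightarrow> 'v) \<Rightarrow> 'k"
  assume kR: "\<forall>Z\<in>H - {Y}. krel UNIV Z (R Z)"
    and "\<exists>Rs. (\<forall>Z\<in>H - {Y}. krel C Z (Rs Z) \<and> (\<forall>t. h (Rs Z t) = R Z t))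
              \<and> pairwise_consistent C (H - {Y}) Rs"
  then obtain Rs where Rs: "\<forall>Z\<in>H - {Y}. krel C Z (Rs Z) \<and> (\<forall>t. h (Rs Z t) = R Z t)"
    and pc: "pairwise_consistent C (H - {Y}) Rs"
    by blast
  have kRs: "\<And>Z. Z \<in> H - {Y} \<Longrightarrow> krel C Z (Rs Z)" and hRs: "\<And>Z t. Z \<in> H - {Y} \<Longrightarrow> h (Rs Z t) = R Z t"
    using Rs by simp_all
  have "X \<in> H - {Y}"
    using ear by (auto simp: is_ear_def)
  define R' where "R' = R(Y := marg (R X) (X \<inter> Y))"
  define Rs' where "Rs' = Rs(Y := marg (Rs X) (X \<inter> Y))"
  have "krel UNIV Z (R' Z)" if "Z \<in> H" for Z
    using that kR krel_marg_Int[OF add_submonoid_UNIV, of X "R X" Y] \<open>X \<in> H - {Y}\<close>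
    by (cases "Z = Y") (simp_all add: R'_def)
  moreover have "krel C Z (Rs' Z)" if "Z \<in> H" for Z
    using that kRs krel_marg_Int[OF C kRs[OF \<open>X \<in> H - {Y}\<close>]]
    by (cases "Z = Y") (simp_all add: Rs'_def)
  moreover have "h (Rs' Z t) = R' Z t" if "Z \<in> H" for Z t
  proof (cases "Z = Y")
    case True
    have "(\<lambda>r. h (Rs X r)) = R X"
      using hRs \<open>X \<in> H - {Y}\<close> by auto
    then show ?thesis
      unfolding True Rs'_def R'_def using marg_hom[OF C h kRs[OF \<open>X \<in> H - {Y}\<close>]] by simp
  qed (use that hRs in \<open>simp add: Rs'_def R'_def\<close>)
  moreover have "pairwise_consistent C H Rs'"
    unfolding Rs'_def using C ear kRs pc by (rule pairwise_consistent_add_ear)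
  ultimately have "globally_consistent UNIV H R'"
    using lgc unfolding lgc_up_to_def by blast
  then have "globally_consistent UNIV (H - {Y}) R'"
    by (rule globally_consistent_subset[OF add_submonoid_UNIV]) blast
  then show "globally_consistent UNIV (H - {Y}) R"
    unfolding globally_consistent_def R'_def by simp
qed

section \<open>A parity counterexample for hypergraphs without ears\<close>

lemma even_card_sym_diff:
  assumes "finite S" "finite T"
  shows "even (card (sym_diff S T)) \<longleftrightarrow> (even (card S) \<longleftrightarrow> even (card T))"
proof -
  have "card S = card (S \<inter> T) + card (S - T)"
    by (rule card_Int_Diff[OF assms(1)])
  moreover have "card T = card (S \<inter> T) + card (T - S)"
    using card_Int_Diff[OF assms(2), of S] by (simp add: Int_commute)
  moreover have "card (sym_diff S T) = card (S - T) + card (T - S)"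
    using assms by (intro card_Un_disjoint) auto
  ultimately show ?thesis
    by presburger
qed

lemma card_filter_remove:
  assumes "finite A" "u \<in> A"
  shows "card {v\<in>A. P v} = card {v\<in>A - {u}. P v} + (if P u then 1 else 0)"
proof -
  have "{v\<in>A. P v} = (if P u then insert u {v\<in>A - {u}. P v} else {v\<in>A - {u}. P v})"
    using assms(2) by auto
  then show ?thesis
    using assms(1) by simp
qed

lemma inj_on_into_infinite:
  assumes "finite A" "infinite (UNIV :: 'v set)"
  obtains f :: "'x \<Rightarrow> 'v" where "inj_on f A"
proof -
  obtain B :: "'v set" where "finite B" "card B = card A"
    using infinite_arbitrarily_large[OF assms(2)] by blast
  then show ?thesis
    using card_le_inj[OF assms(1) \<open>finite B\<close>] that by auto
qed

text \<open>An assignment picks at each vertex \<open>v\<close> an even set of hyperedges containing \<open>v\<close>, stored in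
  the attribute value as its code under \<open>enc\<close>; this is where the infinitude of the value type
  is needed. \<open>charge Z g\<close> counts the vertices of \<open>Z\<close> that pick \<open>Z\<close>.\<close>

locale tseitin =
  fixes H :: "'a set set" and enc :: "'a set set \<Rightarrow> 'v" and X0 :: "'a set"
  assumes finite_H: "finite H" and finite_edges: "\<And>X. X \<in> H \<Longrightarrow> finite X"
    and inj_enc: "inj_on enc (Pow H)" and X0_in_H: "X0 \<in> H"
begin

definition choices :: "'a \<Rightarrow> 'a set set set" where
  "choices v = {S. S \<subseteq> {Z\<in>H. v \<in> Z} \<and> even (card S)}"

definition dec :: "'v \<Rightarrow> 'a set set" where
  "dec = inv_into (Pow H) enc"

definition assignments :: "('a \<Rightarrow> 'v) set" where
  "assignments = PiE (\<Union>H) (\<lambda>v. enc ` choices v)"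

definition charge :: "'a set \<Rightarrow> ('a \<Rightarrow> 'v) \<Rightarrow> nat" where
  "charge Z g = card {v\<in>Z. Z \<in> dec (g v)}"

definition satisfies :: "'a set \<Rightarrow> ('a \<Rightarrow> 'v) \<Rightarrow> bool" where
  "satisfies Z g \<longleftrightarrow> (odd (charge Z g) \<longleftrightarrow> Z = X0)"

definition toggle :: "'a \<Rightarrow> 'a set \<Rightarrow> 'a set \<Rightarrow> ('a \<Rightarrow> 'v) \<Rightarrow> 'a \<Rightarrow> 'v" where
  "toggle u A B g = g(u := enc (sym_diff (dec (g u)) {A, B}))"

definition sat_rel :: "'c::comm_monoid_add \<Rightarrow> 'a set set \<Rightarrow> ('a \<Rightarrow> 'v) \<Rightarrow> 'c" where
  "sat_rel c Zs g = (if g \<in> assignments \<and> (\<forall>Z\<in>Zs. satisfies Z g) then c else 0)"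

lemma finite_assignments: "finite assignments"
proof -
  have "finite (\<Union>H)"
    using finite_H finite_edges by blast
  moreover have "finite (choices v)" for v
    by (rule finite_subset[of _ "Pow H"]) (auto simp: choices_def finite_H)
  ultimately show ?thesis
    unfolding assignments_def by (intro finite_PiE) auto
qed

lemma dec_enc: "S \<subseteq> H \<Longrightarrow> dec (enc S) = S"
  unfolding dec_def by (simp add: inj_enc inv_into_f_f)

lemma assignments_iff: "g \<in> assignments \<longleftrightarrow> g \<in> extensional (\<Union>H) \<and> (\<forall>v\<in>\<Union>H. g v \<in> enc ` choices v)"
  unfolding assignments_def by (auto simp: PiE_iff)

lemma assignment_decE:
  assumes "g \<in> assignments" "v \<in> \<Union>H"
  shows "dec (g v) \<in> choices v" "enc (dec (g v)) = g v"
proof -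
  obtain S where "S \<in> choices v" "g v = enc S"
    using assms unfolding assignments_iff by blast
  moreover have "S \<subseteq> H"
    using \<open>S \<in> choices v\<close> by (auto simp: choices_def)
  ultimately show "dec (g v) \<in> choices v" "enc (dec (g v)) = g v"
    by (simp_all add: dec_enc)
qed

lemma charge_cong:
  assumes "\<And>v. v \<in> Z \<Longrightarrow> g v = g' v"
  shows "charge Z g = charge Z g'"
proof -
  have "{v\<in>Z. Z \<in> dec (g v)} = {v\<in>Z. Z \<in> dec (g' v)}"
    using assms by auto
  then show ?thesis
    by (simp only: charge_def)
qed

lemma satisfies_cong:
  assumes "\<And>v. v \<in> Z \<Longrightarrow> g v = g' v"
  shows "satisfies Z g \<longleftrightarrow> satisfies Z g'"
  using charge_cong[OF assms] by (simp add: satisfies_def)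

lemma empty_assignment:
  "restrict (\<lambda>_. enc {}) (\<Union>H) \<in> assignments"
  "Z \<in> H \<Longrightarrow> satisfies Z (restrict (\<lambda>_. enc {}) (\<Union>H)) \<longleftrightarrow> Z \<noteq> X0"
proof -
  show "restrict (\<lambda>_. enc {}) (\<Union>H) \<in> assignments"
    unfolding assignments_iff by (auto simp: choices_def)
  assume "Z \<in> H"
  then have "{v\<in>Z. Z \<in> dec (restrict (\<lambda>_. enc {}) (\<Union>H) v)} = {}"
    by (auto simp: dec_enc)
  then have "charge Z (restrict (\<lambda>_. enc {}) (\<Union>H)) = 0"
    by (simp only: charge_def card.empty)
  then show "satisfies Z (restrict (\<lambda>_. enc {}) (\<Union>H)) \<longleftrightarrow> Z \<noteq> X0"
    by (simp add: satisfies_def)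
qed

lemma assignment_violates:
  assumes "g \<in> assignments"
  shows "\<exists>Z\<in>H. \<not> satisfies Z g"
proof (rule ccontr)
  assume "\<not> (\<exists>Z\<in>H. \<not> satisfies Z g)"
  then have sat: "\<And>Z. Z \<in> H \<Longrightarrow> satisfies Z g"
    by blast
  have "finite (\<Union>H)"
    using finite_H finite_edges by blast
  \<comment> \<open>double counting of the pairs \<open>(v, Z)\<close> such that \<open>v\<close> picks \<open>Z\<close>\<close>
  have "(\<Sum>v\<in>\<Union>H. card {Z\<in>H. v \<in> Z \<and> Z \<in> dec (g v)}) = (\<Sum>Z\<in>H. charge Z g)"
  proof (rule sum_multicount_gen[OF \<open>finite (\<Union>H)\<close> finite_H], intro ballI)
    fix Z assume "Z \<in> H"
    then have "{v\<in>\<Union>H. v \<in> Z \<and> Z \<in> dec (g v)} = {v\<in>Z. Z \<in> dec (g v)}"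
      by blast
    then show "card {v\<in>\<Union>H. v \<in> Z \<and> Z \<in> dec (g v)} = charge Z g"
      by (simp add: charge_def)
  qed
  moreover have "{Z\<in>H. v \<in> Z \<and> Z \<in> dec (g v)} = dec (g v)" if "v \<in> \<Union>H" for v
    using assignment_decE(1)[OF assms that] by (auto simp: choices_def)
  ultimately have double_count: "(\<Sum>v\<in>\<Union>H. card (dec (g v))) = (\<Sum>Z\<in>H. charge Z g)"
    by simp
  have "even (\<Sum>v\<in>\<Union>H. card (dec (g v)))"
    using assignment_decE(1)[OF assms] by (intro dvd_sum) (simp add: choices_def)
  moreover have "odd (\<Sum>Z\<in>H. charge Z g)"
  proof -
    have "even (\<Sum>Z\<in>H - {X0}. charge Z g)"
      using sat unfolding satisfies_def by (intro dvd_sum) auto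
    moreover have "odd (charge X0 g)"
      using sat[OF X0_in_H] by (simp add: satisfies_def)
    ultimately show ?thesis
      by (simp add: sum.remove[OF finite_H X0_in_H])
  qed
  ultimately show False
    by (simp add: double_count)
qed

context
  fixes u A B
  assumes A: "A \<in> H" and B: "B \<in> H" and AB: "A \<noteq> B" and u: "u \<in> A" "u \<in> B"
begin

lemma toggle_in_choices:
  assumes "g \<in> assignments"
  shows "sym_diff (dec (g u)) {A, B} \<in> choices u"
proof -
  have "u \<in> \<Union>H"
    using A u by blast
  then have "dec (g u) \<subseteq> {Z\<in>H. u \<in> Z}" "even (card (dec (g u)))"
    using assignment_decE(1)[OF assms] by (auto simp: choices_def)
  moreover have "finite (dec (g u))"
    using \<open>dec (g u) \<subseteq> {Z\<in>H. u \<in> Z}\<close> finite_H by (auto intro: finite_subset)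
  moreover have "{A, B} \<subseteq> {Z\<in>H. u \<in> Z}" "even (card {A, B})"
    using A B AB u by auto
  ultimately show ?thesis
    unfolding choices_def using even_card_sym_diff[of "dec (g u)" "{A, B}"] by auto
qed

lemma toggle_in_assignments: "g \<in> assignments \<Longrightarrow> toggle u A B g \<in> assignments"
  using toggle_in_choices A u unfolding assignments_iff toggle_def extensional_def by auto

lemma dec_toggle: "g \<in> assignments \<Longrightarrow> dec (toggle u A B g u) = sym_diff (dec (g u)) {A, B}"
proof -
  assume "g \<in> assignments"
  then have "sym_diff (dec (g u)) {A, B} \<subseteq> H"
    using toggle_in_choices by (auto simp: choices_def)
  then show ?thesis
    by (simp add: toggle_def dec_enc)
qed

lemma toggle_toggle: "g \<in> assignments \<Longrightarrow> toggle u A B (toggle u A B g) = g"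
proof -
  assume g: "g \<in> assignments"
  have "u \<in> \<Union>H"
    using A u by blast
  have "sym_diff (sym_diff (dec (g u)) {A, B}) {A, B} = dec (g u)"
    by blast
  then have "enc (sym_diff (dec (toggle u A B g u)) {A, B}) = g u"
    using dec_toggle[OF g] assignment_decE(2)[OF g \<open>u \<in> \<Union>H\<close>] by simp
  then show ?thesis
    by (auto simp: toggle_def)
qed

lemma satisfies_toggle: "g \<in> assignments \<Longrightarrow> satisfies A (toggle u A B g) \<longleftrightarrow> \<not> satisfies A g"
proof -
  assume g: "g \<in> assignments"
  have "A \<in> dec (toggle u A B g u) \<longleftrightarrow> A \<notin> dec (g u)"
    using dec_toggle[OF g] AB by auto
  moreover have "{v\<in>A - {u}. A \<in> dec (toggle u A B g v)} = {v\<in>A - {u}. A \<in> dec (g v)}"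
    by (auto simp: toggle_def)
  ultimately have "odd (charge A (toggle u A B g)) \<longleftrightarrow> even (charge A g)"
    unfolding charge_def card_filter_remove[OF finite_edges[OF A] u(1)] by simp
  then show ?thesis
    unfolding satisfies_def by blast
qed

end

lemma krel_sat_rel:
  assumes "c \<in> C" "0 \<in> C"
  shows "krel C (\<Union>H) (sat_rel c Zs)"
  unfolding krel_def
proof (intro conjI allI impI)
  show "sat_rel c Zs t \<in> C" for t
    using assms by (simp add: sat_rel_def)
  have "{t. sat_rel c Zs t \<noteq> 0} \<subseteq> assignments"
    by (auto simp: sat_rel_def split: if_splits)
  then show "finite {t. sat_rel c Zs t \<noteq> 0}"
    using finite_assignments by (rule finite_subset)
  show "t \<in> extensional (\<Union>H)" if "sat_rel c Zs t \<noteq> 0" for t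
    using that by (auto simp: sat_rel_def assignments_iff split: if_splits)
qed

lemma marg_sat_rel:
  "marg (sat_rel c Zs) Y t = (\<Sum>g | g \<in> assignments \<and> (\<forall>Z\<in>Zs. satisfies Z g) \<and> restrict g Y = t. c)"
proof -
  let ?S = "{g \<in> assignments. \<forall>Z\<in>Zs. satisfies Z g}"
  have "{g. sat_rel c Zs g \<noteq> 0} \<subseteq> ?S"
    by (auto simp: sat_rel_def split: if_splits)
  then have "marg (sat_rel c Zs) Y t = (\<Sum>g | g \<in> ?S \<and> restrict g Y = t. sat_rel c Zs g)"
    unfolding marg_eq_pushforward using finite_assignments by (intro pushforward_eq_sum) auto
  also have "\<dots> = (\<Sum>g | g \<in> assignments \<and> (\<forall>Z\<in>Zs. satisfies Z g) \<and> restrict g Y = t. c)"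
    by (intro sum.cong) (auto simp: sat_rel_def)
  finally show ?thesis .
qed

lemma marg_sat_rel_pair:
  assumes A: "A \<in> H" and B: "B \<in> H" "B \<noteq> A" and not_ear: "\<not> is_ear H B A"
  shows "marg (sat_rel (c + c) {A, B}) A = marg (sat_rel c {A}) A"
proof
  fix t
  obtain u E where u: "u \<in> B" "u \<notin> A" and E: "E \<in> H" "E \<noteq> B" "u \<in> E"
    using not_ear A B unfolding is_ear_def by blast
  define All where "All = {g. g \<in> assignments \<and> satisfies A g \<and> restrict g A = t}"
  define Good where "Good = {g \<in> All. satisfies B g}"
  define Bad where "Bad = {g \<in> All. \<not> satisfies B g}"
  \<comment> \<open>toggling at \<open>u\<close> is an involution that flips the satisfaction of \<open>B\<close> and fixes \<open>A\<close>\<close>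
  let ?f = "toggle u B E"
  have f_A: "?f g v = g v" if "v \<in> A" for g v
    using that u(2) by (auto simp: toggle_def)
  then have "restrict (?f g) A = restrict g A" "satisfies A (?f g) \<longleftrightarrow> satisfies A g" for g
    by (auto simp: restrict_def intro!: satisfies_cong)
  then have "?f ` Good \<subseteq> Bad" "?f ` Bad \<subseteq> Good"
    unfolding Good_def Bad_def All_def
    using toggle_in_assignments[OF B(1) E(1) E(2)[symmetric] u(1) E(3)]
      satisfies_toggle[OF B(1) E(1) E(2)[symmetric] u(1) E(3)] by auto
  moreover have "?f (?f g) = g" if "g \<in> All" for g
    using that toggle_toggle[OF B(1) E(1) E(2)[symmetric] u(1) E(3)] by (simp add: All_def)
  ultimately have "bij_betw ?f Good Bad"
    by (intro bij_betw_byWitness[where f' = ?f]) (auto simp: Good_def Bad_def)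
  have "finite All"
    unfolding All_def by (rule finite_subset[OF _ finite_assignments]) blast
  have "marg (sat_rel (c + c) {A, B}) A t = (\<Sum>g\<in>Good. c + c)"
    unfolding marg_sat_rel Good_def All_def by (intro sum.cong) auto
  also have "\<dots> = (\<Sum>g\<in>Good. c) + (\<Sum>g\<in>Bad. c)"
    using sum.reindex_bij_betw[OF \<open>bij_betw ?f Good Bad\<close>, of "\<lambda>_. c"] by (simp add: sum.distrib)
  also have "\<dots> = (\<Sum>g\<in>All. c)"
    using \<open>finite All\<close> by (subst sum.union_disjoint[symmetric]) (auto simp: Good_def Bad_def intro!: sum.cong)
  also have "\<dots> = marg (sat_rel c {A}) A t"
    unfolding marg_sat_rel All_def by (intro sum.cong) auto
  finally show "marg (sat_rel (c + c) {A, B}) A t = marg (sat_rel c {A}) A t" .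
qed

lemma tseitin_pairwise_consistent:
  assumes C: "add_submonoid C" "c \<in> C" and no_ear: "\<And>Y X. \<not> is_ear H Y X"
  shows "pairwise_consistent C H (\<lambda>Z. marg (sat_rel c {Z}) Z)"
proof (rule pairwise_consistentI)
  have "0 \<in> C" "c + c \<in> C"
    using C by (auto simp: add_submonoid_def)
  then have kr: "krel C (\<Union>H) (sat_rel d Zs)" if "d \<in> {c, c + c}" for d Zs
    using that C(2) by (auto intro: krel_sat_rel)
  show "krel C Z (marg (sat_rel c {Z}) Z)" for Z
    using kr C(1) krel_marg by blast
  fix A B assume "A \<in> H" "B \<in> H" "A \<noteq> B"
  define W where "W = marg (sat_rel (c + c) {A, B}) (A \<union> B)"
  have fin: "finite {g. sat_rel (c + c) {A, B} g \<noteq> 0}"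
    using krelD(2)[OF kr] by blast
  have "krel C (A \<union> B) W"
    unfolding W_def using kr C(1) krel_marg by blast
  moreover have "marg W A = marg (sat_rel c {A}) A"
    unfolding W_def marg_marg_subset[OF fin Un_upper1]
    using marg_sat_rel_pair \<open>A \<in> H\<close> \<open>B \<in> H\<close> \<open>A \<noteq> B\<close> no_ear by metis
  moreover have "marg (sat_rel (c + c) {B, A}) B = marg (sat_rel c {B}) B"
    using marg_sat_rel_pair \<open>A \<in> H\<close> \<open>B \<in> H\<close> \<open>A \<noteq> B\<close> no_ear by metis
  then have "marg W B = marg (sat_rel c {B}) B"
    unfolding W_def marg_marg_subset[OF fin Un_upper2] by (simp add: insert_commute)
  ultimately show "\<exists>W. krel C (A \<union> B) W \<and> marg W A = marg (sat_rel c {A}) A \<and> marg W B = marg (sat_rel c {B}) B"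
    by blast
qed

lemma marg_sat_rel_nonzeroE:
  assumes "marg (sat_rel k {Z}) Z t \<noteq> 0"
  obtains g where "g \<in> assignments" "satisfies Z g" "restrict g Z = t"
proof -
  obtain g where "sat_rel k {Z} g \<noteq> 0" "restrict g Z = t"
    using assms unfolding marg_eq_pushforward by (rule pushforward_nonzeroE)
  then show ?thesis
    using that by (auto simp: sat_rel_def split: if_splits)
qed

lemma locally_satisfying_assignment:
  assumes "r \<in> extensional (\<Union>H)"
    and local: "\<And>Z. Z \<in> H \<Longrightarrow> \<exists>g\<in>assignments. satisfies Z g \<and> restrict g Z = restrict r Z"
  shows "r \<in> assignments" "Z \<in> H \<Longrightarrow> satisfies Z r"
proof -
  have agree: "g v = r v" if "restrict g Z = restrict r Z" "v \<in> Z" for g Z v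
    using that(2) fun_cong[OF that(1), of v] by (simp add: restrict_def)
  show "r \<in> assignments"
    unfolding assignments_iff
  proof (intro conjI ballI)
    fix v assume "v \<in> \<Union>H"
    then obtain Z where "Z \<in> H" "v \<in> Z"
      by blast
    then obtain g where "g \<in> assignments" "restrict g Z = restrict r Z"
      using local by blast
    moreover have "g v = r v"
      by (rule agree[OF \<open>restrict g Z = restrict r Z\<close> \<open>v \<in> Z\<close>])
    ultimately have "g v \<in> enc ` choices v"
      using \<open>v \<in> \<Union>H\<close> unfolding assignments_iff by blast
    then show "r v \<in> enc ` choices v"
      using \<open>g v = r v\<close> by simp
  qed (rule assms(1))
  show "satisfies Z r" if Z: "Z \<in> H"
  proof -
    obtain g where g: "g \<in> assignments" "satisfies Z g" "restrict g Z = restrict r Z"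
      using local[OF Z] by blast
    have "satisfies Z g \<longleftrightarrow> satisfies Z r"
      by (rule satisfies_cong) (rule agree[OF g(3)])
    with g(2) show ?thesis
      by simp
  qed
qed

lemma tseitin_not_globally_consistent:
  fixes k :: "'k::comm_monoid_add"
  assumes K: "pos_comm_monoid (UNIV :: 'k set)" and "k \<noteq> 0" and Y: "Y \<in> H" "Y \<noteq> X0"
  shows "\<not> globally_consistent UNIV H (\<lambda>Z. marg (sat_rel k {Z}) Z)"
proof
  assume "globally_consistent UNIV H (\<lambda>Z. marg (sat_rel k {Z}) Z)"
  then obtain W where W: "krel UNIV (\<Union>H) W" "\<And>Z. Z \<in> H \<Longrightarrow> marg W Z = marg (sat_rel k {Z}) Z"
    unfolding globally_consistent_def by blast
  have kr: "krel UNIV (\<Union>H) (sat_rel k Zs)" for Zs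
    by (rule krel_sat_rel) simp_all
  \<comment> \<open>the empty choice satisfies \<open>Y\<close>, so \<open>W\<close> has a tuple \<open>r\<close> in its support\<close>
  define g0 where "g0 = restrict (\<lambda>_. enc {}) (\<Union>H)"
  have "sat_rel k {Y} g0 \<noteq> 0"
    using empty_assignment Y \<open>k \<noteq> 0\<close> by (simp add: sat_rel_def g0_def)
  then have "marg (sat_rel k {Y}) Y (restrict g0 Y) \<noteq> 0"
    by (rule marg_pos[OF K kr])
  then have "marg W Y (restrict g0 Y) \<noteq> 0"
    using W(2)[OF Y(1)] by simp
  then obtain r where "W r \<noteq> 0"
    unfolding marg_eq_pushforward by (auto elim: pushforward_nonzeroE)
  have "\<exists>g\<in>assignments. satisfies Z g \<and> restrict g Z = restrict r Z" if "Z \<in> H" for Z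
  proof -
    have "marg (sat_rel k {Z}) Z (restrict r Z) \<noteq> 0"
      using marg_pos[OF K W(1) \<open>W r \<noteq> 0\<close>, of Z] W(2)[OF that] by simp
    then show ?thesis
      by (metis marg_sat_rel_nonzeroE)
  qed
  then have "r \<in> assignments" "\<forall>Z\<in>H. satisfies Z r"
    using locally_satisfying_assignment krelD(3)[OF W(1) \<open>W r \<noteq> 0\<close>] by blast+
  then show False
    using assignment_violates by blast
qed

end

lemma not_lgc_without_ears:
  fixes C :: "'c::comm_monoid_add set" and h :: "'c \<Rightarrow> 'k::comm_monoid_add" and H :: "'a set set"
  assumes K: "pos_comm_monoid (UNIV :: 'k set)" and cover: "is_cover C h"
    and V: "infinite (UNIV :: 'v set)" and H: "finite H" "\<And>X. X \<in> H \<Longrightarrow> finite X"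
    and two: "2 \<le> card H" and no_ear: "\<And>Y X. \<not> is_ear H Y X"
  shows "\<not> lgc_up_to TYPE('v) C h H"
proof
  assume lgc: "lgc_up_to TYPE('v) C h H"
  have "finite (Pow H)"
    using H(1) by simp
  then obtain enc :: "'a set set \<Rightarrow> 'v" where "inj_on enc (Pow H)"
    using V by (rule inj_on_into_infinite)
  have "\<not> card H \<le> Suc 0"
    using two by simp
  then obtain X0 Y where "X0 \<in> H" "Y \<in> H" "Y \<noteq> X0"
    unfolding card_le_Suc0_iff_eq[OF H(1)] by blast
  interpret tseitin H enc X0
    using H \<open>inj_on enc (Pow H)\<close> \<open>X0 \<in> H\<close> by unfold_locales
  obtain k :: 'k where "k \<noteq> 0"
    using pos_comm_monoid_ex_nonzero[OF K] by blast
  have "k \<in> h ` C"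
    using cover by (simp add: is_cover_def)
  then obtain c where "h c = k" "c \<in> C"
    by (metis imageE)
  have C: "add_submonoid C" and hom: "add_hom_on C h"
    using cover by (simp_all add: is_cover_add_submonoid is_cover_add_hom_on)
  then have kr: "krel C (\<Union>H) (sat_rel c Zs)" for Zs
    using \<open>c \<in> C\<close> by (intro krel_sat_rel) (simp_all add: add_submonoid_def)
  have lift: "h (marg (sat_rel c {Z}) Z t) = marg (sat_rel k {Z}) Z t" for Z t
  proof -
    have "h (marg (sat_rel c {Z}) Z t) = marg (\<lambda>g. h (sat_rel c {Z} g)) Z t"
      by (rule marg_hom[OF C hom kr, symmetric])
    also have "(\<lambda>g. h (sat_rel c {Z} g)) = sat_rel k {Z}"
      using hom \<open>h c = k\<close> by (auto simp: sat_rel_def add_hom_on_def)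
    finally show ?thesis .
  qed
  have "\<forall>Z\<in>H. krel UNIV Z (marg (sat_rel k {Z}) Z)"
    using krel_marg[OF add_submonoid_UNIV krel_sat_rel[of k]] by simp
  moreover have "\<exists>Rs. (\<forall>Z\<in>H. krel C Z (Rs Z) \<and> (\<forall>t. h (Rs Z t) = marg (sat_rel k {Z}) Z t))
      \<and> pairwise_consistent C H Rs"
    using krel_marg[OF C kr] lift tseitin_pairwise_consistent[OF C \<open>c \<in> C\<close> no_ear]
    by (intro exI[of _ "\<lambda>Z. marg (sat_rel c {Z}) Z"]) simp
  ultimately have "globally_consistent UNIV H (\<lambda>Z. marg (sat_rel k {Z}) Z)"
    using lgc[unfolded lgc_up_to_def, THEN spec[of _ "\<lambda>Z. marg (sat_rel k {Z}) Z"]] by blast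
  then show False
    using tseitin_not_globally_consistent[OF K \<open>k \<noteq> 0\<close> \<open>Y \<in> H\<close> \<open>Y \<noteq> X0\<close>] by blast
qed

lemma lgc_imp_acyclic:
  fixes C :: "'c::comm_monoid_add set" and h :: "'c \<Rightarrow> 'k::comm_monoid_add" and H :: "'a set set"
  assumes K: "pos_comm_monoid (UNIV :: 'k set)" and cover: "is_cover C h"
    and V: "infinite (UNIV :: 'v set)" and "finite H" "\<And>X. X \<in> H \<Longrightarrow> finite X"
    and "lgc_up_to TYPE('v) C h H"
  shows "hg_acyclic H"
  using assms(4-6)
proof (induction "card H" arbitrary: H rule: less_induct)
  case less
  show ?case
  proof (cases "card H \<le> 1")
    case True
    then show ?thesis
      using less.prems(1) by (rule acyclic_if_card_le_1[rotated])
  next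
    case False
    then have "2 \<le> card H"
      by simp
    show ?thesis
    proof (cases "\<exists>Y X. is_ear H Y X")
      case True
      then obtain Y X where ear: "is_ear H Y X"
        by blast
      then have "Y \<in> H"
        by (simp add: is_ear_def)
      have "lgc_up_to TYPE('v) C h (H - {Y})"
        using is_cover_add_submonoid[OF cover] is_cover_add_hom_on[OF cover] ear less.prems(3)
        by (rule lgc_remove_ear)
      moreover have "card (H - {Y}) < card H"
        using less.prems(1) \<open>Y \<in> H\<close> by (rule card_Diff1_less)
      ultimately have "hg_acyclic (H - {Y})"
        using less.hyps less.prems(1,2) by blast
      then show ?thesis
        using ear by (rule acyclic_add_ear)
    next
      case False
      then show ?thesis
        using not_lgc_without_ears[OF K cover V less.prems(1,2) \<open>2 \<le> card H\<close>] less.prems(3) by blast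
    qed
  qed
qed

theorem theorem46:
  fixes H :: "'a set set"
    and C :: "'c::comm_monoid_add set"
    and h :: "'c \<Rightarrow> 'k::comm_monoid_add"
  assumes K_pos: "pos_comm_monoid (UNIV :: 'k set)"
    and H_fin: "finite H" and edges_fin: "\<forall>X\<in>H. finite X"
    and V_inf: "infinite (UNIV :: 'v set)"
  shows "is_cover (free_carrier :: 'k multiset set) free_hom
       \<and> (hg_acyclic H \<longleftrightarrow> lgc_up_to TYPE('v) (free_carrier :: 'k multiset set) free_hom H)
       \<and> (is_cover C h \<and> lgc_up_to TYPE('v) C h H \<longrightarrow> hg_acyclic H)"
proof (intro conjI impI iffI)
  show free: "is_cover (free_carrier :: 'k multiset set) free_hom"
    using K_pos by (rule is_cover_free)
  show "lgc_up_to TYPE('v) (free_carrier :: 'k multiset set) free_hom H" if "hg_acyclic H"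
    using that by (rule acyclic_imp_lgc_free)
  show "hg_acyclic H" if "lgc_up_to TYPE('v) (free_carrier :: 'k multiset set) free_hom H"
    using lgc_imp_acyclic[OF K_pos free V_inf H_fin] edges_fin that by blast
  show "hg_acyclic H" if "is_cover C h \<and> lgc_up_to TYPE('v) C h H"
    using lgc_imp_acyclic[OF K_pos _ V_inf H_fin] edges_fin that by blast
qed

end
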